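(* Let $n\geq 2$ be an integer and let $G_\mathbb{R}^+(2,n)$ be the Grassmannian of oriented $2$-planes in $\mathbb{R}^n$, equipped with the natural action of a maximal torus $T$ of $\mathrm{SO}_n$. Then the orbit space $G_\mathbb{R}^+(2,n)/T$ is homeomorphic to the topological join \[S^{\lfloor n/2 \rfloor-1} \ast \mathbb{P}_\mathbb{C}^{\lceil n/2 \rceil-2}.\]
   Context: $G_\mathbb{R}^+(2,n)=\{(v_1,v_2)\in\mathbb{R}^{n\times 2}\mid \langle v_i,v_j\rangle=\delta_{ij}\}/\mathrm{SO}_2$, where $\mathrm{SO}_2$ acts by right multiplication; $\mathrm{SO}_n$ acts by $A\cdot(v_1,v_2)=(Av_1,Av_2)$. A maximal torus $T\cong (S^1)^{\lfloor n/2\rfloor}$ of $\mathrm{SO}_n$ is given by the block-diagonal matrices $\mathrm{diag}(Q_{\phi_1},\dots,Q_{\phi_k})$ for $n=2k$ and $\mathrm{diag}(Q_{\phi_1},\dots,Q_{\phi_k},1)$ for $n=2k+1$, where $Q_\phi=\begin{pmatrix}\cos\phi&-\sin\phi\\ \sin\phi&\cos\phi\end{pmatrix}$. The join $A\ast B$ is $(A\times B\times[0,1])/\sim$ with $(a,b,0)\sim(a',b,0)$ and $(a,b,1)\sim(a,b',1)$; by convention $\mathbb{P}^{-1}_\mathbb{C}=\emptyset$ and $A\ast\emptyset=A$. *)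

theory Defs
  imports "HOL-Analysis.Analysis"
begin

definition qrel :: "'a topology \<Rightarrow> ('a \<Rightarrow> 'a \<Rightarrow> bool) \<Rightarrow> ('a \<times> 'a) set" where
  "qrel X R = {(x, y). x \<in> topspace X \<and> y \<in> topspace X \<and> R x y}"

text \<open>The quotient space of X by the relation R (assumed to be an equivalence
  relation on the points of X): the points are the equivalence classes, and a set of
  classes is open iff its union is open in X.\<close>
definition quotient_top :: "'a topology \<Rightarrow> ('a \<Rightarrow> 'a \<Rightarrow> bool) \<Rightarrow> 'a set topology" where
  "quotient_top X R =
     topology (\<lambda>U. U \<subseteq> topspace X // qrel X R \<and> openin X (\<Union>U))"

lemma istopology_quotient_top:
  assumes "equiv (topspace X) (qrel X R)"
  shows "istopology (\<lambda>U. U \<subseteq> topspace X // qrel X R \<and> openin X (\<Union>U))"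
  unfolding istopology_def
proof (rule conjI; intro allI impI)
  fix S T assume S: "S \<subseteq> topspace X // qrel X R \<and> openin X (\<Union>S)"
    and T: "T \<subseteq> topspace X // qrel X R \<and> openin X (\<Union>T)"
  have "\<Union>(S \<inter> T) = \<Union>S \<inter> \<Union>T"
  proof
    show "\<Union>S \<inter> \<Union>T \<subseteq> \<Union>(S \<inter> T)"
    proof
      fix x assume "x \<in> \<Union>S \<inter> \<Union>T"
      then obtain A B where AB: "A \<in> S" "B \<in> T" "x \<in> A" "x \<in> B" by blast
      moreover have "A \<in> topspace X // qrel X R" "B \<in> topspace X // qrel X R" using AB S T by auto
      ultimately have "A = B" using AB quotient_disj[OF assms, of A B] by blast
      then show "x \<in> \<Union>(S \<inter> T)" using AB by blast
    qed
  qed blast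
  moreover have "openin X (\<Union>S \<inter> \<Union>T)" using S T by (simp add: openin_Int)
  ultimately have o: "openin X (\<Union>(S \<inter> T))" by simp
  have s: "S \<inter> T \<subseteq> topspace X // qrel X R" using S by blast
  show "S \<inter> T \<subseteq> topspace X // qrel X R \<and> openin X (\<Union>(S \<inter> T))"
    using o s by blast
next
  fix K assume H: "\<forall>S\<in>K. S \<subseteq> topspace X // qrel X R \<and> openin X (\<Union>S)"
  have 1: "\<Union>K \<subseteq> topspace X // qrel X R" using H by blast
  have "\<Union>(\<Union>K) = (\<Union>S\<in>K. \<Union>S)" by blast
  then have 2: "openin X (\<Union>(\<Union>K))" using H by (auto intro: openin_Union)
  show "\<Union>K \<subseteq> topspace X // qrel X R \<and> openin X (\<Union>(\<Union>K))" using 1 2 by blast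
qed

definition inner_n :: "nat \<Rightarrow> (nat \<Rightarrow> real) \<Rightarrow> (nat \<Rightarrow> real) \<Rightarrow> real" where
  "inner_n n v w = (\<Sum>i<n. v i * w i)"

definition stiefel2 :: "nat \<Rightarrow> ((nat \<Rightarrow> real) \<times> (nat \<Rightarrow> real)) topology" where
  "stiefel2 n = subtopology (prod_topology (Euclidean_space n) (Euclidean_space n))
     {(v1, v2). inner_n n v1 v1 = 1 \<and> inner_n n v2 v2 = 1 \<and> inner_n n v1 v2 = 0}"

definition so2_act :: "real \<Rightarrow> (nat \<Rightarrow> real) \<times> (nat \<Rightarrow> real) \<Rightarrow> (nat \<Rightarrow> real) \<times> (nat \<Rightarrow> real)" where
  "so2_act \<theta> vw = (\<lambda>i. cos \<theta> * fst vw i + sin \<theta> * snd vw i,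
                    \<lambda>i. - sin \<theta> * fst vw i + cos \<theta> * snd vw i)"

definition grass2 :: "nat \<Rightarrow> ((nat \<Rightarrow> real) \<times> (nat \<Rightarrow> real)) set topology" where
  "grass2 n = quotient_top (stiefel2 n) (\<lambda>x y. \<exists>\<theta>. y = so2_act \<theta> x)"

text \<open>The block diagonal matrix diag(Q_{phi_0},...,Q_{phi_{k-1}}(,1)), k = n div 2,
  acting on R^n (coordinates indexed 0..n-1, block j acting on coordinates 2j, 2j+1).\<close>
definition torus_mat :: "nat \<Rightarrow> (nat \<Rightarrow> real) \<Rightarrow> (nat \<Rightarrow> real) \<Rightarrow> (nat \<Rightarrow> real)" where
  "torus_mat n \<phi> v = (\<lambda>i. if i < 2 * (n div 2) then
       (if even i then cos (\<phi> (i div 2)) * v i - sin (\<phi> (i div 2)) * v (Suc i)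
        else sin (\<phi> (i div 2)) * v (i - 1) + cos (\<phi> (i div 2)) * v i)
     else v i)"

definition torus_act_grass ::
  "nat \<Rightarrow> (nat \<Rightarrow> real) \<Rightarrow> ((nat \<Rightarrow> real) \<times> (nat \<Rightarrow> real)) set \<Rightarrow> ((nat \<Rightarrow> real) \<times> (nat \<Rightarrow> real)) set" where
  "torus_act_grass n \<phi> P = (\<lambda>(v1, v2). (torus_mat n \<phi> v1, torus_mat n \<phi> v2)) ` P"

definition grass2_mod_torus :: "nat \<Rightarrow> ((nat \<Rightarrow> real) \<times> (nat \<Rightarrow> real)) set set topology" where
  "grass2_mod_torus n = quotient_top (grass2 n) (\<lambda>P Q. \<exists>\<phi>. Q = torus_act_grass n \<phi> P)"

text \<open>Complex projective space P(C^d) = (C^d - 0)/C^*, i.e. CP^(d-1); empty for d = 0.\<close>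
definition complex_proj :: "nat \<Rightarrow> (nat \<Rightarrow> complex) set topology" where
  "complex_proj d = quotient_top
     (subtopology (product_topology (\<lambda>_. (euclidean :: complex topology)) UNIV)
        {z. (\<forall>i\<ge>d. z i = 0) \<and> (\<exists>i. z i \<noteq> 0)})
     (\<lambda>z w. \<exists>c. c \<noteq> 0 \<and> w = (\<lambda>i. c * z i))"

definition join_rel :: "'a \<times> 'b \<times> real \<Rightarrow> 'a \<times> 'b \<times> real \<Rightarrow> bool" where
  "join_rel p q = (p = q \<or>
     (snd (snd p) = 0 \<and> snd (snd q) = 0 \<and> fst (snd p) = fst (snd q)) \<or>
     (snd (snd p) = 1 \<and> snd (snd q) = 1 \<and> fst p = fst q))"

text \<open>A * B = (A x B x [0,1])/~ with (a,b,0) ~ (a',b,0), (a,b,1) ~ (a,b',1);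
  by convention A * (empty) = A, realised as (A x {pt} x {1})/~ (which is just a copy of A).\<close>
definition join_top :: "'a topology \<Rightarrow> 'b topology \<Rightarrow> ('a \<times> 'b \<times> real) set topology" where
  "join_top X Y =
     (if topspace Y = {} then
        quotient_top (prod_topology X (prod_topology (discrete_topology {undefined})
                        (subtopology euclideanreal {1}))) join_rel
      else
        quotient_top (prod_topology X (prod_topology Y (subtopology euclideanreal {0..1})))
          join_rel)"

end

theory Submission
  imports Defs
begin

(* Write a frame (v1, v2) as z = v1 + i v2 in C^n, so that sum z_i^2 = 0 and sum |z_i|^2 = 2;
   rotating the frame multiplies z by a unit scalar.  In the coordinates
   w_j^+- = z_2j +- i z_(2j+1) the j-th circle of the torus acts diagonally by e^(+-i phi_j), so
   d_j = |w_j^+|^2 - |w_j^-|^2 and c_j = w_j^+ w_j^- are torus invariants, and SO_2 fixes d while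
   rotating all c_j by one common phase.  Conversely, d and c up to phase determine the orbit:
   each pair (w_j^+, w_j^-) is recovered up to opposite phases, and for odd n the last
   coordinate up to sign from z_(n-1)^2 = - sum c_j.  Normalising by |d| + |c| therefore
   identifies G/T with the compact set K of pairs (D, c modulo phase) with |D| + |c| = 1 and,
   for even n, sum c_j = 0.  Writing a point of K as (t a, (1 - t) c') with a on the unit sphere
   of R^k, k = n div 2, and c' a unit vector of admissible c's, which form a copy of C^m with
   m = ceil(n/2) - 1, identifies K with the join of S^(k-1) and CP^(m-1).  Both identifications
   are continuous maps out of compact quotients into a Hausdorff space whose fibres are exactly
   the classes. *)

section \<open>Quotient spaces\<close>

definition quotient_class :: "'a topology \<Rightarrow> ('a \<Rightarrow> 'a \<Rightarrow> bool) \<Rightarrow> 'a \<Rightarrow> 'a set" where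
  "quotient_class X R x = qrel X R `` {x}"

lemma openin_quotient_top:
  assumes "equiv (topspace X) (qrel X R)"
  shows "openin (quotient_top X R) U \<longleftrightarrow> U \<subseteq> topspace X // qrel X R \<and> openin X (\<Union>U)"
  unfolding quotient_top_def using istopology_quotient_top[OF assms] topology_inverse' by metis

lemma topspace_quotient_top:
  assumes "equiv (topspace X) (qrel X R)"
  shows "topspace (quotient_top X R) = topspace X // qrel X R"
proof -
  have "openin (quotient_top X R) (topspace X // qrel X R)"
    using assms by (simp add: openin_quotient_top Union_quotient)
  then have "topspace X // qrel X R \<subseteq> topspace (quotient_top X R)"
    by (simp add: openin_subset)
  moreover have "topspace (quotient_top X R) \<subseteq> topspace X // qrel X R"
    using openin_quotient_top[OF assms] by (metis openin_topspace)
  ultimately show ?thesis by blast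
qed

lemma equiv_qrelI:
  assumes "\<And>x. x \<in> topspace X \<Longrightarrow> R x x"
    and "\<And>x y. x \<in> topspace X \<Longrightarrow> y \<in> topspace X \<Longrightarrow> R x y \<Longrightarrow> R y x"
    and "\<And>x y z. x \<in> topspace X \<Longrightarrow> y \<in> topspace X \<Longrightarrow> z \<in> topspace X \<Longrightarrow>
           R x y \<Longrightarrow> R y z \<Longrightarrow> R x z"
  shows "equiv (topspace X) (qrel X R)"
  unfolding equiv_def refl_on_def sym_def trans_def qrel_def using assms by blast

lemma quotient_class_eq_iff:
  assumes "equiv (topspace X) (qrel X R)" "x \<in> topspace X" "y \<in> topspace X"
  shows "quotient_class X R x = quotient_class X R y \<longleftrightarrow> R x y"
proof -
  have "quotient_class X R x = quotient_class X R y \<longleftrightarrow> (x, y) \<in> qrel X R"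
    unfolding quotient_class_def using assms by (rule eq_equiv_class_iff)
  then show ?thesis using assms by (simp add: qrel_def)
qed

lemma quotient_map_quotient_class:
  assumes e: "equiv (topspace X) (qrel X R)"
  shows "quotient_map X (quotient_top X R) (quotient_class X R)"
  unfolding quotient_map_def
proof (intro conjI allI impI)
  show "quotient_class X R ` topspace X = topspace (quotient_top X R)"
    by (auto simp: topspace_quotient_top[OF e] quotient_def quotient_class_def)
  fix U assume "U \<subseteq> topspace (quotient_top X R)"
  then have U: "U \<subseteq> topspace X // qrel X R" by (simp add: topspace_quotient_top[OF e])
  have "{x \<in> topspace X. quotient_class X R x \<in> U} = \<Union>U"
  proof (intro equalityI subsetI)
    fix x assume "x \<in> {x \<in> topspace X. quotient_class X R x \<in> U}"
    moreover have "x \<in> quotient_class X R x" if "x \<in> topspace X"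
      using e that unfolding quotient_class_def
      by (simp add: equiv_class_self equiv_def refl_on_def)
    ultimately show "x \<in> \<Union>U" by blast
  next
    fix x assume "x \<in> \<Union>U"
    then obtain A where A: "A \<in> U" "x \<in> A" by blast
    then obtain a where a: "a \<in> topspace X" "A = qrel X R `` {a}"
      using U by (auto simp: quotient_def)
    then have "(a, x) \<in> qrel X R" using A by blast
    then have "qrel X R `` {x} = A" using a e by (metis equiv_class_eq_iff)
    moreover have "x \<in> topspace X" using \<open>(a, x) \<in> qrel X R\<close> by (simp add: qrel_def)
    ultimately show "x \<in> {x \<in> topspace X. quotient_class X R x \<in> U}"
      using A by (simp add: quotient_class_def)
  qed
  then show "openin X {x \<in> topspace X. quotient_class X R x \<in> U} = openin (quotient_top X R) U"
    using U by (simp add: openin_quotient_top[OF e])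
qed

lemma homeomorphic_space_quotient_image:
  assumes q: "quotient_map X Y q" and f: "continuous_map X Z f" and Z: "Hausdorff_space Z"
    and fibres: "\<And>x y. x \<in> topspace X \<Longrightarrow> y \<in> topspace X \<Longrightarrow> f x = f y \<longleftrightarrow> q x = q y"
    and K: "compactin X K" "q ` K = topspace Y"
  shows "Y homeomorphic_space subtopology Z (f ` topspace X)"
proof -
  obtain g where g: "continuous_map Y Z g" "g ` topspace Y = f ` topspace X"
      "\<And>x. x \<in> topspace X \<Longrightarrow> g (q x) = f x"
    using quotient_map_lift_exists[OF q f] fibres by metis
  have surj: "q ` topspace X = topspace Y" using q by (simp add: quotient_map_def)
  have "inj_on g (topspace Y)"
  proof (rule inj_onI)
    fix a b assume "a \<in> topspace Y" "b \<in> topspace Y" "g a = g b"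
    then obtain x y where "x \<in> topspace X" "y \<in> topspace X" "a = q x" "b = q y"
      using surj by (metis imageE)
    then show "a = b" using \<open>g a = g b\<close> g(3) fibres by metis
  qed
  moreover have "compact_space Y"
    using image_compactin[OF K(1) quotient_imp_continuous_map[OF q]] K(2)
    by (simp add: compact_space_def)
  ultimately have "embedding_map Y Z g"
    using continuous_imp_embedding_map g(1) Z by blast
  then show ?thesis using embedding_map_imp_homeomorphic_space g(2) by metis
qed

lemma quotient_top_homeomorphic_space_self:
  assumes "equiv (topspace X) (qrel X R)"
    and "\<And>x y. x \<in> topspace X \<Longrightarrow> y \<in> topspace X \<Longrightarrow> R x y \<Longrightarrow> x = y"
  shows "quotient_top X R homeomorphic_space X"
proof -
  have "inj_on (quotient_class X R) (topspace X)"
    using assms quotient_class_eq_iff[OF assms(1)] by (auto simp: inj_on_def)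
  then have "homeomorphic_map X (quotient_top X R) (quotient_class X R)"
    using quotient_map_quotient_class[OF assms(1)] by (simp add: homeomorphic_map_def)
  then show ?thesis
    using homeomorphic_space_sym homeomorphic_space by metis
qed

section \<open>Frames and the two group actions\<close>

lemma continuous_on_fst_coordinate [continuous_intros]:
  fixes f :: "'a::topological_space \<Rightarrow> ('c \<Rightarrow> 'b::topological_space) \<times> 'd::topological_space"
  shows "continuous_on S f \<Longrightarrow> continuous_on S (\<lambda>x. fst (f x) i)"
  by (rule continuous_on_product_then_coordinatewise[OF continuous_on_fst])

lemma continuous_on_snd_coordinate [continuous_intros]:
  fixes f :: "'a::topological_space \<Rightarrow> 'd::topological_space \<times> ('c \<Rightarrow> 'b::topological_space)"
  shows "continuous_on S f \<Longrightarrow> continuous_on S (\<lambda>x. snd (f x) i)"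
  by (rule continuous_on_product_then_coordinatewise[OF continuous_on_snd])

lemma continuous_on_coordinate [continuous_intros]:
  "continuous_on S (\<lambda>x::'a \<Rightarrow> 'b::topological_space. x i)"
  by (rule continuous_on_subset[OF continuous_on_product_coordinates]) simp

lemma continuous_on_inner_n [continuous_intros]:
  "continuous_on S f \<Longrightarrow> continuous_on S g \<Longrightarrow> continuous_on S (\<lambda>x. inner_n n (f x) (g x))"
proof -
  assume "continuous_on S f" "continuous_on S g"
  then have "continuous_on S (\<lambda>x. f x i)" "continuous_on S (\<lambda>x. g x i)" for i
    by (simp_all add: continuous_on_product_then_coordinatewise)
  then show ?thesis unfolding inner_n_def by (intro continuous_intros)
qed

lemma compact_PiE_UNIV:
  assumes "\<And>i. compact (S i)"
  shows "compact (Pi\<^sub>E UNIV S)"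
proof -
  have "compactin (product_topology (\<lambda>i. euclidean) UNIV) (Pi\<^sub>E UNIV S)"
    using assms by (simp add: compactin_PiE)
  then show ?thesis by (simp add: euclidean_product_topology)
qed

lemma sum_lessThan_pairs:
  fixes f :: "nat \<Rightarrow> 'a::comm_monoid_add"
  shows "(\<Sum>i<n. f i) = (\<Sum>j<n div 2. f (2*j) + f (Suc (2*j))) + (if odd n then f (n - 1) else 0)"
proof -
  have pairs: "(\<Sum>i<2*k. f i) = (\<Sum>j<k. f (2*j) + f (Suc (2*j)))" for k
    by (induction k) (auto simp: ac_simps)
  have "n = 2 * (n div 2) \<and> even n \<or> n = Suc (2 * (n div 2)) \<and> odd n" by presburger
  then consider "n = 2 * (n div 2)" "even n" | "n = Suc (2 * (n div 2))" "odd n" by blast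
  then show ?thesis
  proof cases
    case 1
    then show ?thesis using pairs[of "n div 2"] by simp
  next
    case 2
    then have "{..<n} = insert (n - 1) {..<2 * (n div 2)}" by (auto simp: odd_pos)
    then show ?thesis using pairs[of "n div 2"] 2 by (simp add: add.commute)
  qed
qed

lemma inner_n_lincomb:
  "inner_n n (\<lambda>i. a * v i + b * w i) (\<lambda>i. c * v i + d * w i) =
     a*c * inner_n n v v + (a*d + b*c) * inner_n n v w + b*d * inner_n n w w"
proof -
  have "inner_n n (\<lambda>i. a * v i + b * w i) (\<lambda>i. c * v i + d * w i) =
      (\<Sum>i<n. a*c * (v i * v i) + (a*d + b*c) * (v i * w i) + b*d * (w i * w i))"
    unfolding inner_n_def by (rule sum.cong) (auto simp: algebra_simps)
  then show ?thesis unfolding inner_n_def by (simp add: sum.distrib sum_distrib_left)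
qed

definition stiefel_set :: "nat \<Rightarrow> ((nat \<Rightarrow> real) \<times> (nat \<Rightarrow> real)) set" where
  "stiefel_set n = {(v1, v2). (\<forall>i\<ge>n. v1 i = 0) \<and> (\<forall>i\<ge>n. v2 i = 0) \<and>
      inner_n n v1 v1 = 1 \<and> inner_n n v2 v2 = 1 \<and> inner_n n v1 v2 = 0}"

lemma Euclidean_space_eq_top_of_set: "Euclidean_space n = top_of_set {x. \<forall>i\<ge>n. x i = 0}"
  by (simp add: Euclidean_space_def euclidean_product_topology)

lemma stiefel2_eq_top_of_set: "stiefel2 n = top_of_set (stiefel_set n)"
proof -
  have "stiefel2 n = subtopology (top_of_set ({x. \<forall>i\<ge>n. x i = (0::real)} \<times> {x. \<forall>i\<ge>n. x i = 0}))
     {(v1, v2). inner_n n v1 v1 = 1 \<and> inner_n n v2 v2 = 1 \<and> inner_n n v1 v2 = 0}"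
    unfolding stiefel2_def Euclidean_space_eq_top_of_set prod_topology_subtopology
    by (simp add: subtopology_subtopology Times_Int_Times)
  also have "\<dots> = top_of_set (stiefel_set n)"
    by (simp add: subtopology_subtopology stiefel_set_def) (rule arg_cong[where f = top_of_set], auto)
  finally show ?thesis .
qed

lemma topspace_stiefel2 [simp]: "topspace (stiefel2 n) = stiefel_set n"
  by (simp add: stiefel2_eq_top_of_set)

lemma abs_le_1_if_inner_n_eq_1:
  assumes "inner_n n v v = 1" "\<forall>i\<ge>n. v i = 0"
  shows "\<bar>v i\<bar> \<le> 1"
proof (cases "i < n")
  case True
  then have "(v i)\<^sup>2 \<le> inner_n n v v"
    unfolding inner_n_def power2_eq_square by (intro member_le_sum) auto
  then show ?thesis using assms by (simp add: abs_square_le_1)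
qed (use assms in simp)

lemma closed_vanishing_beyond: "closed {x :: nat \<Rightarrow> 'a::{t2_space, zero}. \<forall>i\<ge>n. x i = 0}"
proof -
  have "{x :: nat \<Rightarrow> 'a. \<forall>i\<ge>n. x i = 0} = (\<Inter>i\<in>{n..}. {x. x i = 0})" by auto
  then show ?thesis
    by (simp add: closed_INT closed_Collect_eq continuous_on_coordinate)
qed

lemma compact_stiefel_set: "compact (stiefel_set n)"
proof -
  let ?V = "{v :: nat \<Rightarrow> real. \<forall>i\<ge>n. v i = 0}"
  let ?B = "Pi\<^sub>E UNIV (\<lambda>i::nat. {-1..1::real})"
  have "stiefel_set n = (?V \<times> ?V) \<inter> {x. inner_n n (fst x) (fst x) = 1}
      \<inter> {x. inner_n n (snd x) (snd x) = 1} \<inter> {x. inner_n n (fst x) (snd x) = 0}"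
    unfolding stiefel_set_def by auto
  moreover have "closed {x :: (nat \<Rightarrow> real) \<times> (nat \<Rightarrow> real). inner_n n (fst x) (fst x) = 1}"
    by (intro closed_Collect_eq continuous_intros)
  moreover have "closed {x :: (nat \<Rightarrow> real) \<times> (nat \<Rightarrow> real). inner_n n (snd x) (snd x) = 1}"
    by (intro closed_Collect_eq continuous_intros)
  moreover have "closed {x :: (nat \<Rightarrow> real) \<times> (nat \<Rightarrow> real). inner_n n (fst x) (snd x) = 0}"
    by (intro closed_Collect_eq continuous_intros)
  ultimately have closed: "closed (stiefel_set n)"
    by (simp only: closed_Int closed_Times closed_vanishing_beyond)
  have "stiefel_set n \<subseteq> ?B \<times> ?B"
  proof
    fix x assume "x \<in> stiefel_set n"
    then obtain v1 v2 where x: "x = (v1, v2)" and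
      h: "inner_n n v1 v1 = 1" "\<forall>i\<ge>n. v1 i = 0" "inner_n n v2 v2 = 1" "\<forall>i\<ge>n. v2 i = 0"
      by (auto simp: stiefel_set_def)
    show "x \<in> ?B \<times> ?B"
      using abs_le_1_if_inner_n_eq_1[OF h(1,2)] abs_le_1_if_inner_n_eq_1[OF h(3,4)]
      by (auto simp: x abs_le_iff)
  qed
  then have "stiefel_set n = (?B \<times> ?B) \<inter> stiefel_set n" by blast
  also have "compact \<dots>"
    by (intro compact_Int_closed compact_Times compact_PiE_UNIV compact_Icc closed)
  finally show ?thesis .
qed

lemma so2_act_in_stiefel_set:
  assumes "x \<in> stiefel_set n" shows "so2_act \<theta> x \<in> stiefel_set n"
proof -
  obtain v1 v2 where x: "x = (v1, v2)" by fastforce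
  have h: "inner_n n v1 v1 = 1" "inner_n n v2 v2 = 1" "inner_n n v1 v2 = 0"
    using assms by (simp_all add: x stiefel_set_def)
  have "inner_n n (\<lambda>i. cos \<theta> * v1 i + sin \<theta> * v2 i) (\<lambda>i. cos \<theta> * v1 i + sin \<theta> * v2 i) = 1"
      "inner_n n (\<lambda>i. - sin \<theta> * v1 i + cos \<theta> * v2 i) (\<lambda>i. - sin \<theta> * v1 i + cos \<theta> * v2 i) = 1"
      "inner_n n (\<lambda>i. cos \<theta> * v1 i + sin \<theta> * v2 i) (\<lambda>i. - sin \<theta> * v1 i + cos \<theta> * v2 i) = 0"
    unfolding inner_n_lincomb h by (simp_all add: algebra_simps flip: power2_eq_square)
  then show ?thesis using assms by (simp add: x so2_act_def stiefel_set_def)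
qed

lemma so2_act_0 [simp]: "so2_act 0 x = x"
  by (simp add: so2_act_def)

lemma so2_act_add: "so2_act a (so2_act b x) = so2_act (a + b) x"
  by (auto simp: so2_act_def cos_add sin_add algebra_simps)

lemma torus_mat_even:
  "j < n div 2 \<Longrightarrow> torus_mat n \<phi> v (2*j) = cos (\<phi> j) * v (2*j) - sin (\<phi> j) * v (Suc (2*j))"
  by (simp add: torus_mat_def)

lemma torus_mat_odd:
  "j < n div 2 \<Longrightarrow> torus_mat n \<phi> v (Suc (2*j)) = sin (\<phi> j) * v (2*j) + cos (\<phi> j) * v (Suc (2*j))"
  by (simp add: torus_mat_def)

lemma torus_mat_fixed: "2 * (n div 2) \<le> i \<Longrightarrow> torus_mat n \<phi> v i = v i"
  by (simp add: torus_mat_def)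

lemma torus_mat_cases:
  obtains j where "j < n div 2" "i = 2*j" | j where "j < n div 2" "i = Suc (2*j)"
    | "2 * (n div 2) \<le> i"
proof (cases "2 * (n div 2) \<le> i")
  case False
  then show ?thesis using that(1,2) by (cases "even i") (auto elim!: evenE oddE)
qed (rule that(3))

lemma inner_n_torus_mat: "inner_n n (torus_mat n \<phi> v) (torus_mat n \<phi> w) = inner_n n v w"
proof -
  have rotation: "(c*a - s*b)*(c*a' - s*b') + (s*a + c*b)*(s*a' + c*b') = a*a' + b*b'"
    if "s\<^sup>2 + c\<^sup>2 = 1" for s c a b a' b' :: real
  proof -
    have "(c*a - s*b)*(c*a' - s*b') + (s*a + c*b)*(s*a' + c*b') = (s\<^sup>2 + c\<^sup>2)*(a*a' + b*b')"
      by (simp add: algebra_simps power2_eq_square)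
    then show ?thesis using that by simp
  qed
  have blocks: "torus_mat n \<phi> v (2*j) * torus_mat n \<phi> w (2*j)
      + torus_mat n \<phi> v (Suc (2*j)) * torus_mat n \<phi> w (Suc (2*j))
      = v (2*j) * w (2*j) + v (Suc (2*j)) * w (Suc (2*j))" if "j < n div 2" for j
    using that rotation[OF sin_cos_squared_add] by (simp add: torus_mat_even torus_mat_odd)
  have "odd n \<Longrightarrow> 2 * (n div 2) \<le> n - Suc 0" by presburger
  then have last: "odd n \<Longrightarrow> torus_mat n \<phi> v (n - Suc 0) = v (n - Suc 0)"
      "odd n \<Longrightarrow> torus_mat n \<phi> w (n - Suc 0) = w (n - Suc 0)"
    using torus_mat_fixed by blast+
  show ?thesis unfolding inner_n_def
    by (subst sum_lessThan_pairs, subst (2) sum_lessThan_pairs) (simp add: blocks last)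
qed

lemma torus_mat_lincomb:
  "torus_mat n \<phi> (\<lambda>i. a * v i + b * w i) = (\<lambda>i. a * torus_mat n \<phi> v i + b * torus_mat n \<phi> w i)"
  by (auto simp: torus_mat_def algebra_simps)

lemma torus_mat_0 [simp]: "torus_mat n (\<lambda>_. 0) v = v"
  by (auto simp: torus_mat_def)

lemma torus_mat_add: "torus_mat n \<phi> (torus_mat n \<psi> v) = torus_mat n (\<lambda>j. \<phi> j + \<psi> j) v"
proof
  fix i
  show "torus_mat n \<phi> (torus_mat n \<psi> v) i = torus_mat n (\<lambda>j. \<phi> j + \<psi> j) v i"
  proof (cases n i rule: torus_mat_cases)
    case 1
    then show ?thesis
      by (simp only: torus_mat_even torus_mat_odd) (simp add: cos_add sin_add algebra_simps)
  next
    case 2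
    then show ?thesis
      by (simp only: torus_mat_even torus_mat_odd) (simp add: cos_add sin_add algebra_simps)
  qed (simp add: torus_mat_fixed)
qed

definition torus_act :: "nat \<Rightarrow> (nat \<Rightarrow> real) \<Rightarrow>
    (nat \<Rightarrow> real) \<times> (nat \<Rightarrow> real) \<Rightarrow> (nat \<Rightarrow> real) \<times> (nat \<Rightarrow> real)" where
  "torus_act n \<phi> x = (torus_mat n \<phi> (fst x), torus_mat n \<phi> (snd x))"

lemma torus_act_grass_eq_image: "torus_act_grass n \<phi> P = torus_act n \<phi> ` P"
  unfolding torus_act_grass_def torus_act_def by (auto simp: case_prod_beta image_def)

lemma torus_act_in_stiefel_set:
  assumes "x \<in> stiefel_set n" shows "torus_act n \<phi> x \<in> stiefel_set n"
proof -
  obtain v1 v2 where x: "x = (v1, v2)" by fastforce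
  have "\<forall>i\<ge>n. torus_mat n \<phi> v1 i = 0" "\<forall>i\<ge>n. torus_mat n \<phi> v2 i = 0"
    using assms by (auto simp: x stiefel_set_def torus_mat_fixed)
  then show ?thesis
    using assms by (simp add: x torus_act_def stiefel_set_def inner_n_torus_mat)
qed

lemma torus_act_so2_act: "torus_act n \<phi> (so2_act \<theta> x) = so2_act \<theta> (torus_act n \<phi> x)"
  unfolding torus_act_def so2_act_def fst_conv snd_conv torus_mat_lincomb ..

lemma torus_act_0 [simp]: "torus_act n (\<lambda>_. 0) x = x"
  by (simp add: torus_act_def)

lemma torus_act_add: "torus_act n \<phi> (torus_act n \<psi> x) = torus_act n (\<lambda>j. \<phi> j + \<psi> j) x"
  by (simp add: torus_act_def torus_mat_add)

abbreviation so2_rel :: "(nat \<Rightarrow> real) \<times> (nat \<Rightarrow> real) \<Rightarrow> (nat \<Rightarrow> real) \<times> (nat \<Rightarrow> real) \<Rightarrow> bool" where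
  "so2_rel \<equiv> \<lambda>x y. \<exists>\<theta>. y = so2_act \<theta> x"

abbreviation torus_rel :: "nat \<Rightarrow> ((nat \<Rightarrow> real) \<times> (nat \<Rightarrow> real)) set \<Rightarrow>
    ((nat \<Rightarrow> real) \<times> (nat \<Rightarrow> real)) set \<Rightarrow> bool" where
  "torus_rel n \<equiv> \<lambda>P Q. \<exists>\<phi>. Q = torus_act_grass n \<phi> P"

lemma equiv_so2_rel: "equiv (topspace (stiefel2 n)) (qrel (stiefel2 n) so2_rel)"
proof (rule equiv_qrelI)
  fix x y assume "so2_rel x y"
  then obtain \<theta> where "y = so2_act \<theta> x" by blast
  then have "x = so2_act (-\<theta>) y" by (simp add: so2_act_add)
  then show "so2_rel y x" by blast
qed (metis so2_act_0, metis so2_act_add)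

lemma equiv_torus_rel: "equiv (topspace (grass2 n)) (qrel (grass2 n) (torus_rel n))"
proof (rule equiv_qrelI)
  fix P show "torus_rel n P P"
    by (rule exI[of _ "\<lambda>_. 0"]) (simp add: torus_act_grass_eq_image)
next
  fix P Q assume "torus_rel n P Q"
  then obtain \<phi> where "Q = torus_act n \<phi> ` P" by (auto simp: torus_act_grass_eq_image)
  then have "P = torus_act n (\<lambda>j. - \<phi> j) ` Q" by (simp add: image_image torus_act_add)
  then show "torus_rel n Q P" by (auto simp: torus_act_grass_eq_image)
next
  fix P Q S assume "torus_rel n P Q" "torus_rel n Q S"
  then obtain \<phi> \<psi> where "Q = torus_act n \<phi> ` P" "S = torus_act n \<psi> ` Q"
    by (auto simp: torus_act_grass_eq_image)
  then have "S = torus_act n (\<lambda>j. \<psi> j + \<phi> j) ` P" by (simp add: image_image torus_act_add)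
  then show "torus_rel n P S" by (auto simp: torus_act_grass_eq_image)
qed

definition plane_class :: "nat \<Rightarrow> (nat \<Rightarrow> real) \<times> (nat \<Rightarrow> real) \<Rightarrow> ((nat \<Rightarrow> real) \<times> (nat \<Rightarrow> real)) set" where
  "plane_class n = quotient_class (stiefel2 n) so2_rel"

definition orbit_map :: "nat \<Rightarrow> (nat \<Rightarrow> real) \<times> (nat \<Rightarrow> real) \<Rightarrow> ((nat \<Rightarrow> real) \<times> (nat \<Rightarrow> real)) set set" where
  "orbit_map n = quotient_class (grass2 n) (torus_rel n) \<circ> plane_class n"

lemma quotient_map_plane_class: "quotient_map (stiefel2 n) (grass2 n) (plane_class n)"
  unfolding grass2_def plane_class_def by (rule quotient_map_quotient_class[OF equiv_so2_rel])

lemma quotient_map_orbit_map: "quotient_map (stiefel2 n) (grass2_mod_torus n) (orbit_map n)"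
  unfolding orbit_map_def grass2_mod_torus_def
  by (rule quotient_map_compose[OF quotient_map_plane_class quotient_map_quotient_class[OF equiv_torus_rel]])

lemma plane_class_in_grass2: "x \<in> stiefel_set n \<Longrightarrow> plane_class n x \<in> topspace (grass2 n)"
  using quotient_map_plane_class[of n] unfolding quotient_map_def by auto

lemma plane_class_eq: "x \<in> stiefel_set n \<Longrightarrow> plane_class n x = range (\<lambda>\<theta>. so2_act \<theta> x)"
  by (auto simp: plane_class_def quotient_class_def qrel_def so2_act_in_stiefel_set)

lemma torus_act_grass_plane_class:
  assumes "x \<in> stiefel_set n"
  shows "torus_act_grass n \<phi> (plane_class n x) = plane_class n (torus_act n \<phi> x)"
  using assms torus_act_in_stiefel_set
  by (simp add: plane_class_eq torus_act_grass_eq_image image_image torus_act_so2_act)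

lemma orbit_map_eq_iff:
  assumes "x \<in> stiefel_set n" "y \<in> stiefel_set n"
  shows "orbit_map n x = orbit_map n y \<longleftrightarrow> (\<exists>\<phi> \<theta>. y = so2_act \<theta> (torus_act n \<phi> x))"
proof -
  have "orbit_map n x = orbit_map n y \<longleftrightarrow> torus_rel n (plane_class n x) (plane_class n y)"
    unfolding orbit_map_def o_def
    using quotient_class_eq_iff[OF equiv_torus_rel] plane_class_in_grass2 assms by blast
  also have "\<dots> \<longleftrightarrow> (\<exists>\<phi>. plane_class n (torus_act n \<phi> x) = plane_class n y)"
    using torus_act_grass_plane_class[OF assms(1)] by auto
  also have "\<dots> \<longleftrightarrow> (\<exists>\<phi>. so2_rel (torus_act n \<phi> x) y)"
  proof -
    have "plane_class n (torus_act n \<phi> x) = plane_class n y \<longleftrightarrow> so2_rel (torus_act n \<phi> x) y" for \<phi>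
      unfolding plane_class_def using torus_act_in_stiefel_set[OF assms(1)] assms(2)
      by (intro quotient_class_eq_iff[OF equiv_so2_rel]) simp_all
    then show ?thesis by blast
  qed
  finally show ?thesis by blast
qed

section \<open>Torus invariants in complex coordinates\<close>

definition cvec :: "(nat \<Rightarrow> real) \<times> (nat \<Rightarrow> real) \<Rightarrow> nat \<Rightarrow> complex" where
  "cvec x i = Complex (fst x i) (snd x i)"

definition frame_of_cvec :: "(nat \<Rightarrow> complex) \<Rightarrow> (nat \<Rightarrow> real) \<times> (nat \<Rightarrow> real)" where
  "frame_of_cvec z = (\<lambda>i. Re (z i), \<lambda>i. Im (z i))"

lemma cvec_frame_of_cvec [simp]: "cvec (frame_of_cvec z) = z"
  by (simp add: cvec_def frame_of_cvec_def fun_eq_iff complex_eq_iff)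

lemma cvec_inject: "cvec x = cvec y \<Longrightarrow> x = y"
  by (simp add: cvec_def fun_eq_iff complex_eq_iff prod_eq_iff)

lemma sum_cvec_square:
  "(\<Sum>i<n. (cvec x i)\<^sup>2) =
     Complex (inner_n n (fst x) (fst x) - inner_n n (snd x) (snd x)) (2 * inner_n n (fst x) (snd x))"
proof -
  have "(\<Sum>i<n. (cvec x i)\<^sup>2) = (\<Sum>i<n. Complex (fst x i * fst x i - snd x i * snd x i) (2 * (fst x i * snd x i)))"
    by (rule sum.cong) (auto simp: cvec_def complex_eq_iff power2_eq_square)
  then show ?thesis
    by (simp add: complex_eq_iff inner_n_def Re_sum Im_sum sum_subtractf sum_distrib_left)
qed

lemma sum_norm_cvec_square:
  "(\<Sum>i<n. (cmod (cvec x i))\<^sup>2) = inner_n n (fst x) (fst x) + inner_n n (snd x) (snd x)"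
proof -
  have "(\<Sum>i<n. (cmod (cvec x i))\<^sup>2) = (\<Sum>i<n. (fst x i)\<^sup>2 + (snd x i)\<^sup>2)"
    by (rule sum.cong) (auto simp: cvec_def cmod_power2)
  then show ?thesis by (simp add: inner_n_def power2_eq_square sum.distrib)
qed

lemma stiefel_set_iff_cvec:
  "x \<in> stiefel_set n \<longleftrightarrow>
     (\<forall>i\<ge>n. cvec x i = 0) \<and> (\<Sum>i<n. (cvec x i)\<^sup>2) = 0 \<and> (\<Sum>i<n. (cmod (cvec x i))\<^sup>2) = 2"
  unfolding sum_cvec_square sum_norm_cvec_square
  by (cases x) (auto simp: stiefel_set_def cvec_def complex_eq_iff)

lemma cvec_so2_act: "cvec (so2_act \<theta> x) i = cis (-\<theta>) * cvec x i"
  by (simp add: cvec_def so2_act_def complex_eq_iff cis.ctr algebra_simps)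

lemma cvec_torus_act_even: "j < n div 2 \<Longrightarrow>
    cvec (torus_act n \<phi> x) (2*j) = of_real (cos (\<phi> j)) * cvec x (2*j) - of_real (sin (\<phi> j)) * cvec x (Suc (2*j))"
  by (simp add: cvec_def torus_act_def torus_mat_even complex_eq_iff)

lemma cvec_torus_act_odd: "j < n div 2 \<Longrightarrow>
    cvec (torus_act n \<phi> x) (Suc (2*j)) = of_real (sin (\<phi> j)) * cvec x (2*j) + of_real (cos (\<phi> j)) * cvec x (Suc (2*j))"
  by (simp add: cvec_def torus_act_def torus_mat_odd complex_eq_iff)

lemma cvec_torus_act_fixed: "2 * (n div 2) \<le> i \<Longrightarrow> cvec (torus_act n \<phi> x) i = cvec x i"
  by (simp add: cvec_def torus_act_def torus_mat_fixed)

definition wplus :: "(nat \<Rightarrow> real) \<times> (nat \<Rightarrow> real) \<Rightarrow> nat \<Rightarrow> complex" where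
  "wplus x j = cvec x (2*j) + \<i> * cvec x (Suc (2*j))"

definition wminus :: "(nat \<Rightarrow> real) \<times> (nat \<Rightarrow> real) \<Rightarrow> nat \<Rightarrow> complex" where
  "wminus x j = cvec x (2*j) - \<i> * cvec x (Suc (2*j))"

definition norm_gap :: "(nat \<Rightarrow> real) \<times> (nat \<Rightarrow> real) \<Rightarrow> nat \<Rightarrow> real" where
  "norm_gap x j = (cmod (wplus x j))\<^sup>2 - (cmod (wminus x j))\<^sup>2"

definition wprod :: "(nat \<Rightarrow> real) \<times> (nat \<Rightarrow> real) \<Rightarrow> nat \<Rightarrow> complex" where
  "wprod x j = wplus x j * wminus x j"

lemma cvec_eq_wplus_wminus:
  "cvec x (2*j) = (wplus x j + wminus x j) / 2"
  "cvec x (Suc (2*j)) = (wplus x j - wminus x j) / (2 * \<i>)"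
  by (simp_all add: wplus_def wminus_def field_simps)

lemma wprod_eq: "wprod x j = (cvec x (2*j))\<^sup>2 + (cvec x (Suc (2*j)))\<^sup>2"
  by (simp add: wprod_def wplus_def wminus_def algebra_simps power2_eq_square)

lemma wplus_torus_act: "j < n div 2 \<Longrightarrow> wplus (torus_act n \<phi> x) j = cis (\<phi> j) * wplus x j"
  unfolding wplus_def by (simp only: cvec_torus_act_even cvec_torus_act_odd)
    (simp add: cis.ctr complex_eq_iff algebra_simps)

lemma wminus_torus_act: "j < n div 2 \<Longrightarrow> wminus (torus_act n \<phi> x) j = cis (- \<phi> j) * wminus x j"
  unfolding wminus_def by (simp only: cvec_torus_act_even cvec_torus_act_odd)
    (simp add: cis.ctr complex_eq_iff algebra_simps)

lemma wplus_so2_act: "wplus (so2_act \<theta> x) j = cis (-\<theta>) * wplus x j"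
  by (simp add: wplus_def cvec_so2_act algebra_simps)

lemma wminus_so2_act: "wminus (so2_act \<theta> x) j = cis (-\<theta>) * wminus x j"
  by (simp add: wminus_def cvec_so2_act algebra_simps)

lemma norm_gap_torus_act: "j < n div 2 \<Longrightarrow> norm_gap (torus_act n \<phi> x) j = norm_gap x j"
  by (simp add: norm_gap_def wplus_torus_act wminus_torus_act norm_mult)

lemma wprod_torus_act: "j < n div 2 \<Longrightarrow> wprod (torus_act n \<phi> x) j = wprod x j"
proof -
  assume j: "j < n div 2"
  have "cis (\<phi> j) * cis (- \<phi> j) = 1" by (simp add: cis_mult)
  then show ?thesis using j by (simp add: wprod_def wplus_torus_act wminus_torus_act algebra_simps)
qed

lemma norm_gap_so2_act: "norm_gap (so2_act \<theta> x) j = norm_gap x j"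
  by (simp add: norm_gap_def wplus_so2_act wminus_so2_act norm_mult)

lemma wprod_so2_act: "wprod (so2_act \<theta> x) j = cis (-2*\<theta>) * wprod x j"
proof -
  have "cis (-\<theta>) * cis (-\<theta>) = cis (-2*\<theta>)" by (simp add: cis_mult)
  then show ?thesis by (simp add: wprod_def wplus_so2_act wminus_so2_act algebra_simps)
qed

lemma sum_cvec_square_eq_sum_wprod:
  "(\<Sum>i<n. (cvec x i)\<^sup>2) = (\<Sum>j<n div 2. wprod x j) + (if odd n then (cvec x (n - 1))\<^sup>2 else 0)"
  by (subst sum_lessThan_pairs) (simp add: wprod_eq)

lemma cvec_block_eq_0:
  assumes "norm_gap x j = 0" "wprod x j = 0"
  shows "cvec x (2*j) = 0" "cvec x (Suc (2*j)) = 0"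
proof -
  have "wplus x j = 0 \<or> wminus x j = 0" using assms(2) by (simp add: wprod_def)
  moreover have "cmod (wplus x j) = cmod (wminus x j)" using assms(1) by (simp add: norm_gap_def)
  ultimately have "wplus x j = 0" "wminus x j = 0" by auto
  then show "cvec x (2*j) = 0" "cvec x (Suc (2*j)) = 0" by (simp_all add: cvec_eq_wplus_wminus)
qed

lemma stiefel_set_nonzero_block:
  assumes "x \<in> stiefel_set n"
  shows "\<exists>j < n div 2. norm_gap x j \<noteq> 0 \<or> wprod x j \<noteq> 0"
proof (rule ccontr)
  assume none: "\<not> ?thesis"
  then have blocks: "cvec x (2*j) = 0" "cvec x (Suc (2*j)) = 0" if "j < n div 2" for j
    using cvec_block_eq_0 that by blast+
  have "(\<Sum>j<n div 2. wprod x j) = 0" using none by simp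
  then have "odd n \<Longrightarrow> (cvec x (n - 1))\<^sup>2 = 0"
    using assms sum_cvec_square_eq_sum_wprod[of x n] by (simp add: stiefel_set_iff_cvec)
  then have "(\<Sum>i<n. (cmod (cvec x i))\<^sup>2) = 0"
    by (subst sum_lessThan_pairs) (simp add: blocks)
  then show False using assms by (simp add: stiefel_set_iff_cvec)
qed

section \<open>Embedding the orbit space\<close>

lemma cnj_mult_self_eq_1: "cmod u = 1 \<Longrightarrow> cnj u * u = 1"
  by (metis complex_norm_square mult.commute of_real_1 power_one)

lemma cis_Arg_unit: "cmod u = 1 \<Longrightarrow> cis (Arg u) = u"
  by (subst cis_Arg) (auto simp: sgn_div_norm)

lemma eq_if_diff_and_mult_eq:
  fixes A B A' B' :: real
  assumes "0 \<le> A" "0 \<le> B" "0 \<le> A'" "0 \<le> B'" "A - B = A' - B'" "A * B = A' * B'"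
  shows "A = A'" "B = B'"
proof -
  \<comment> \<open>the sum is determined by the difference and the product\<close>
  have "(A + B)\<^sup>2 = (A - B)\<^sup>2 + 4 * (A * B)" by (simp add: power2_eq_square algebra_simps)
  also have "\<dots> = (A' - B')\<^sup>2 + 4 * (A' * B')" unfolding assms(5,6) ..
  also have "\<dots> = (A' + B')\<^sup>2" by (simp add: power2_eq_square algebra_simps)
  finally have "A + B = A' + B'" using assms(1-4) by (simp add: power2_eq_iff_nonneg)
  then show "A = A'" "B = B'" using assms(5) by linarith+
qed

lemma opposite_phases_exist:
  fixes V V' W W' :: complex
  assumes gap: "(cmod V)\<^sup>2 - (cmod V')\<^sup>2 = (cmod W)\<^sup>2 - (cmod W')\<^sup>2" and prod: "V * V' = W * W'"
  obtains \<phi> where "V = cis \<phi> * W" "V' = cis (-\<phi>) * W'"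
proof -
  have "cmod V * cmod V' = cmod W * cmod W'" using arg_cong[OF prod, of cmod] by (simp add: norm_mult)
  then have "(cmod V)\<^sup>2 * (cmod V')\<^sup>2 = (cmod W)\<^sup>2 * (cmod W')\<^sup>2" by (metis power_mult_distrib)
  then have "(cmod V)\<^sup>2 = (cmod W)\<^sup>2" "(cmod V')\<^sup>2 = (cmod W')\<^sup>2"
    using eq_if_diff_and_mult_eq[OF _ _ _ _ gap] by simp_all
  then have nV: "cmod V = cmod W" and nV': "cmod V' = cmod W'"
    by (simp_all add: power2_eq_iff_nonneg)
  show ?thesis
  proof (cases "W = 0")
    case False
    define \<zeta> where "\<zeta> = V / W"
    have z1: "cmod \<zeta> = 1" using nV False by (simp add: \<zeta>_def norm_divide)
    have V: "V = \<zeta> * W" using False by (simp add: \<zeta>_def)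
    have "\<zeta> * W * V' = W * W'" using prod V by simp
    then have "\<zeta> * V' = W'" using False by (simp add: mult.commute mult.left_commute)
    then have "cnj \<zeta> * \<zeta> * V' = cnj \<zeta> * W'" by (simp add: mult.assoc)
    then have V': "V' = cnj \<zeta> * W'" using cnj_mult_self_eq_1[OF z1] by simp
    show ?thesis
      by (rule that[of "Arg \<zeta>"]) (use V V' cis_Arg_unit[OF z1] in \<open>metis cis_cnj\<close>)+
  next
    case True
    then have V0: "V = 0" using nV by simp
    show ?thesis
    proof (cases "W' = 0")
      case True
      then show ?thesis using V0 nV' \<open>W = 0\<close> that[of 0] by simp
    next
      case False
      define \<zeta> where "\<zeta> = V' / W'"
      have z1: "cmod \<zeta> = 1" using nV' False by (simp add: \<zeta>_def norm_divide)
      have V': "V' = \<zeta> * W'" using False by (simp add: \<zeta>_def)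
      show ?thesis
        by (rule that[of "- Arg \<zeta>"]) (simp_all add: V0 \<open>W = 0\<close> V' cis_Arg_unit[OF z1])
    qed
  qed
qed

lemma unit_sqrt_mapping:
  fixes u a b :: complex
  assumes u: "cmod u = 1" and sq: "b\<^sup>2 = u * a\<^sup>2"
  obtains \<nu> where "cmod \<nu> = 1" "\<nu> * \<nu> = u" "b = \<nu> * a"
proof -
  define \<nu> where "\<nu> = cis (Arg u / 2)"
  have \<nu>: "\<nu> * \<nu> = u" using cis_Arg_unit[OF u] by (simp add: \<nu>_def cis_mult)
  then have "b\<^sup>2 = (\<nu> * a)\<^sup>2" using sq by (simp add: power2_eq_square algebra_simps)
  then have "b = \<nu> * a \<or> b = (- \<nu>) * a" by (simp add: power2_eq_iff)
  moreover have "cmod \<nu> = 1" "cmod (- \<nu>) = 1" "(- \<nu>) * (- \<nu>) = u"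
    using \<nu> by (simp_all add: \<nu>_def)
  ultimately show ?thesis using that \<nu> by blast
qed

text \<open>The class of \<open>(D, c)\<close> modulo a common phase of the coordinates of \<open>c\<close>, realised in a
  Hausdorff space by the rank-one Hermitian matrix \<open>c c\<^sup>*\<close>.\<close>
definition forget_phase :: "nat \<Rightarrow> (nat \<Rightarrow> real) \<Rightarrow> (nat \<Rightarrow> complex) \<Rightarrow>
    (nat \<Rightarrow> real) \<times> (nat \<times> nat \<Rightarrow> complex)" where
  "forget_phase k D c = ((\<lambda>j. if j < k then D j else 0),
     (\<lambda>pq. if fst pq < k \<and> snd pq < k then c (fst pq) * cnj (c (snd pq)) else 0))"

lemma outer_product_eq_imp_phase:
  assumes outer: "\<And>p q. p < k \<Longrightarrow> q < k \<Longrightarrow> c' p * cnj (c' q) = c p * cnj (c q)"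
  shows "\<exists>u. cmod u = 1 \<and> (\<forall>j<k. c' j = u * c j)"
proof -
  have norm: "cmod (c' p) = cmod (c p)" if "p < k" for p
    using outer[OF that that] by (metis complex_norm_square norm_ge_zero of_real_eq_iff power2_eq_iff_nonneg)
  show ?thesis
  proof (cases "\<exists>p<k. c p \<noteq> 0")
    case False
    then have "\<forall>j<k. c' j = 1 * c j" using norm by auto
    then show ?thesis using norm_one by blast
  next
    case True
    then obtain p where p: "p < k" "c p \<noteq> 0" by blast
    define u where "u = c' p / c p"
    have u: "cmod u = 1" using norm[OF p(1)] p(2) by (simp add: u_def norm_divide)
    have "c' q = u * c q" if "q < k" for q
    proof -
      have "c' p = u * c p" using p(2) by (simp add: u_def)
      then have "c' q * cnj u * cnj (c p) = c q * cnj (c p)"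
        using outer[OF that p(1)] by (simp add: mult.assoc)
      then have "c' q * cnj u = c q" using p(2) by simp
      then have "c' q * (cnj u * u) = c q * u" by (simp add: mult.assoc[symmetric])
      then have "c' q = c q * u" unfolding cnj_mult_self_eq_1[OF u] by simp
      then show ?thesis by (simp add: mult.commute)
    qed
    then show ?thesis using u by blast
  qed
qed

lemma forget_phase_eq_iff:
  "forget_phase k D c = forget_phase k D' c' \<longleftrightarrow>
     (\<forall>j<k. D' j = D j) \<and> (\<exists>u. cmod u = 1 \<and> (\<forall>j<k. c' j = u * c j))"
proof
  assume eq: "forget_phase k D c = forget_phase k D' c'"
  have "D' j = D j" if "j < k" for j
    using fun_cong[OF arg_cong[OF eq, of fst], of j] that by (simp add: forget_phase_def)
  moreover have "c' p * cnj (c' q) = c p * cnj (c q)" if "p < k" "q < k" for p q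
    using fun_cong[OF arg_cong[OF eq, of snd], of "(p, q)"] that by (simp add: forget_phase_def)
  ultimately show "(\<forall>j<k. D' j = D j) \<and> (\<exists>u. cmod u = 1 \<and> (\<forall>j<k. c' j = u * c j))"
    using outer_product_eq_imp_phase by blast
next
  assume "(\<forall>j<k. D' j = D j) \<and> (\<exists>u. cmod u = 1 \<and> (\<forall>j<k. c' j = u * c j))"
  then obtain u where D: "\<forall>j<k. D' j = D j" and u: "cmod u = 1" and c: "\<forall>j<k. c' j = u * c j"
    by blast
  have "c' p * cnj (c' q) = c p * cnj (c q)" if "p < k" "q < k" for p q
  proof -
    have "c' p * cnj (c' q) = (cnj u * u) * (c p * cnj (c q))"
      using that c by (simp add: algebra_simps)
    then show ?thesis using cnj_mult_self_eq_1[OF u] by simp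
  qed
  then show "forget_phase k D c = forget_phase k D' c'"
    using D by (auto simp: forget_phase_def fun_eq_iff)
qed

lemma continuous_on_forget_phase:
  assumes "\<And>j. continuous_on S (\<lambda>x. D x j)" "\<And>j. continuous_on S (\<lambda>x. c x j)"
  shows "continuous_on S (\<lambda>x. forget_phase k (D x) (c x))"
  unfolding forget_phase_def
proof (intro continuous_on_Pair continuous_on_coordinatewise_then_product)
  fix j show "continuous_on S (\<lambda>x. if j < k then D x j else 0)"
    using assms(1) by (cases "j < k") simp_all
next
  fix pq :: "nat \<times> nat"
  show "continuous_on S (\<lambda>x. if fst pq < k \<and> snd pq < k then c x (fst pq) * cnj (c x (snd pq)) else 0)"
  proof (cases "fst pq < k \<and> snd pq < k")
    case True
    then show ?thesis using assms(2) by (simp add: continuous_intros)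
  next
    case False
    then show ?thesis by (simp only: if_False continuous_on_const)
  qed
qed

definition weight :: "nat \<Rightarrow> (nat \<Rightarrow> real) \<Rightarrow> (nat \<Rightarrow> complex) \<Rightarrow> real" where
  "weight k D c = L2_set D {..<k} + L2_set (\<lambda>j. cmod (c j)) {..<k}"

lemma weight_nonneg: "0 \<le> weight k D c"
  by (simp add: weight_def)

lemma weight_eq_0_iff: "weight k D c = 0 \<longleftrightarrow> (\<forall>j<k. D j = 0 \<and> c j = 0)"
  by (auto simp: weight_def add_nonneg_eq_0_iff L2_set_eq_0_iff)

lemma weight_scale:
  "0 \<le> s \<Longrightarrow> weight k (\<lambda>j. s * D j) (\<lambda>j. of_real s * c j) = s * weight k D c"
  by (simp add: weight_def L2_set_right_distrib norm_mult distrib_left)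

lemma weight_eq_if_forget_phase_eq:
  assumes "forget_phase k D c = forget_phase k D' c'"
  shows "weight k D c = weight k D' c'"
proof -
  obtain u where "\<forall>j<k. D' j = D j" "cmod u = 1" "\<forall>j<k. c' j = u * c j"
    using assms by (auto simp: forget_phase_eq_iff)
  then show ?thesis
    unfolding weight_def by (intro arg_cong2[where f = "(+)"] L2_set_cong) (auto simp: norm_mult)
qed

lemma forget_phase_cong:
  "(\<And>j. j < k \<Longrightarrow> D' j = D j) \<Longrightarrow> (\<And>j. j < k \<Longrightarrow> c' j = c j) \<Longrightarrow>
    forget_phase k D c = forget_phase k D' c'"
  unfolding forget_phase_eq_iff by (metis mult_1 norm_one)

lemma weight_cong:
  "(\<And>j. j < k \<Longrightarrow> D' j = D j) \<Longrightarrow> (\<And>j. j < k \<Longrightarrow> c' j = c j) \<Longrightarrow>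
    weight k D c = weight k D' c'"
  by (metis forget_phase_cong weight_eq_if_forget_phase_eq)

lemma continuous_on_weight:
  assumes "\<And>j. continuous_on S (\<lambda>x. D x j)" "\<And>j. continuous_on S (\<lambda>x. c x j)"
  shows "continuous_on S (\<lambda>x. weight k (D x) (c x))"
  unfolding weight_def L2_set_def by (intro continuous_intros assms)

lemma cvec_scaled_if_blocks_scaled:
  assumes "x \<in> stiefel_set n" "y \<in> stiefel_set n"
    and plus: "\<And>j. j < n div 2 \<Longrightarrow> wplus y j = s * wplus x j"
    and minus: "\<And>j. j < n div 2 \<Longrightarrow> wminus y j = s * wminus x j"
    and last: "odd n \<Longrightarrow> cvec y (n - 1) = s * cvec x (n - 1)"
  shows "cvec y i = s * cvec x i"
proof (cases n i rule: torus_mat_cases)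
  case (1 j)
  then show ?thesis using plus[OF 1(1)] minus[OF 1(1)]
    by (simp only: 1(2) cvec_eq_wplus_wminus) (simp add: algebra_simps add_divide_distrib)
next
  case (2 j)
  then show ?thesis using plus[OF 2(1)] minus[OF 2(1)]
    by (simp only: 2(2) cvec_eq_wplus_wminus) (simp add: algebra_simps diff_divide_distrib)
next
  case 3
  show ?thesis
  proof (cases "i < n")
    case True
    then have "odd n" "i = n - 1" using 3 by presburger+
    then show ?thesis using last by simp
  next
    case False
    then show ?thesis using assms(1,2) by (simp add: stiefel_set_iff_cvec)
  qed
qed

lemma stiefel_set_eq_if_cvec_scaled:
  assumes "x \<in> stiefel_set n" "y \<in> stiefel_set n" "0 < s" "\<And>i. cvec y i = of_real s * cvec x i"
  shows "y = x"
proof -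
  have "(\<Sum>i<n. (cmod (cvec y i))\<^sup>2) = s\<^sup>2 * (\<Sum>i<n. (cmod (cvec x i))\<^sup>2)"
    using assms(3,4) by (simp add: norm_mult power_mult_distrib sum_distrib_left)
  then have "s\<^sup>2 = 1\<^sup>2" using assms(1,2) by (simp add: stiefel_set_iff_cvec)
  then have "s = 1" using assms(3) power2_eq_iff_nonneg[of s 1] by simp
  then show ?thesis using assms(4) by (intro cvec_inject) (simp add: fun_eq_iff)
qed

definition frame_weight :: "nat \<Rightarrow> (nat \<Rightarrow> real) \<times> (nat \<Rightarrow> real) \<Rightarrow> real" where
  "frame_weight n x = weight (n div 2) (norm_gap x) (wprod x)"

definition orbit_invariant :: "nat \<Rightarrow> (nat \<Rightarrow> real) \<times> (nat \<Rightarrow> real) \<Rightarrow>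
    (nat \<Rightarrow> real) \<times> (nat \<times> nat \<Rightarrow> complex)" where
  "orbit_invariant n x = forget_phase (n div 2)
     (\<lambda>j. norm_gap x j / frame_weight n x) (\<lambda>j. wprod x j / of_real (frame_weight n x))"

lemma frame_weight_pos: "x \<in> stiefel_set n \<Longrightarrow> 0 < frame_weight n x"
  using stiefel_set_nonzero_block[of x n] weight_nonneg[of "n div 2" "norm_gap x" "wprod x"]
  by (auto simp: frame_weight_def less_le weight_eq_0_iff)

lemma orbit_invariant_action: "orbit_invariant n (so2_act \<theta> (torus_act n \<phi> x)) = orbit_invariant n x"
proof -
  let ?y = "so2_act \<theta> (torus_act n \<phi> x)"
  have gap: "\<forall>j<n div 2. norm_gap ?y j = norm_gap x j"
    by (simp add: norm_gap_so2_act norm_gap_torus_act)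
  have prod: "\<forall>j<n div 2. wprod ?y j = cis (-2*\<theta>) * wprod x j"
    by (simp add: wprod_so2_act wprod_torus_act)
  have "forget_phase (n div 2) (norm_gap x) (wprod x) = forget_phase (n div 2) (norm_gap ?y) (wprod ?y)"
    unfolding forget_phase_eq_iff using gap prod by (intro conjI exI[of _ "cis (-2*\<theta>)"]) auto
  then have w: "frame_weight n ?y = frame_weight n x"
    unfolding frame_weight_def by (metis weight_eq_if_forget_phase_eq)
  have "orbit_invariant n x = orbit_invariant n ?y"
    unfolding orbit_invariant_def w forget_phase_eq_iff
    using gap prod by (intro conjI exI[of _ "cis (-2*\<theta>)"]) auto
  then show ?thesis by simp
qed

lemma orbit_invariant_eq_imp_scaled:
  assumes x: "x \<in> stiefel_set n" and y: "y \<in> stiefel_set n"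
    and eq: "orbit_invariant n x = orbit_invariant n y"
  obtains l u where "0 < l" "cmod u = 1"
    "\<And>j. j < n div 2 \<Longrightarrow> norm_gap y j = l * norm_gap x j"
    "\<And>j. j < n div 2 \<Longrightarrow> wprod y j = of_real l * u * wprod x j"
proof -
  define a b where "a = frame_weight n x" and "b = frame_weight n y"
  have a: "0 < a" and b: "0 < b" using frame_weight_pos x y by (simp_all add: a_def b_def)
  obtain u where u: "cmod u = 1"
    and gap: "\<forall>j<n div 2. norm_gap y j / b = norm_gap x j / a"
    and prod: "\<forall>j<n div 2. wprod y j / of_real b = u * (wprod x j / of_real a)"
    using eq unfolding orbit_invariant_def forget_phase_eq_iff a_def b_def by blast
  show ?thesis
  proof (rule that[of "b / a" u])
    fix j assume "j < n div 2"
    then show "norm_gap y j = b / a * norm_gap x j" "wprod y j = of_real (b / a) * u * wprod x j"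
      using gap prod a b by (auto simp: field_simps)
  qed (use a b u in simp_all)
qed

lemma last_coordinate_phase:
  assumes x: "x \<in> stiefel_set n" and y: "y \<in> stiefel_set n" and u: "cmod u = 1"
    and prod: "\<And>j. j < n div 2 \<Longrightarrow> wprod y j = of_real (s\<^sup>2) * u * wprod x j"
  obtains \<nu> where "cmod \<nu> = 1" "\<nu> * \<nu> = u" "odd n \<Longrightarrow> cvec y (n - 1) = \<nu> * (of_real s * cvec x (n - 1))"
proof (cases "odd n")
  case True
  have "(\<Sum>j<n div 2. wprod y j) = of_real (s\<^sup>2) * u * (\<Sum>j<n div 2. wprod x j)"
    by (simp add: prod sum_distrib_left)
  moreover have "(\<Sum>j<n div 2. wprod y j) = - (cvec y (n - 1))\<^sup>2"
    "(\<Sum>j<n div 2. wprod x j) = - (cvec x (n - 1))\<^sup>2"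
    using x y True sum_cvec_square_eq_sum_wprod[of x n] sum_cvec_square_eq_sum_wprod[of y n]
    by (simp_all add: stiefel_set_iff_cvec eq_neg_iff_add_eq_0)
  ultimately have "(cvec y (n - 1))\<^sup>2 = u * (of_real s * cvec x (n - 1))\<^sup>2"
    by (simp add: power_mult_distrib algebra_simps)
  then show ?thesis using unit_sqrt_mapping[OF u] that by metis
next
  case False
  then show ?thesis using unit_sqrt_mapping[OF u, of 0 0] that by auto
qed

lemma torus_act_match_blocks:
  assumes gap: "\<And>j. j < n div 2 \<Longrightarrow> norm_gap y j = s\<^sup>2 * norm_gap x j"
    and prod: "\<And>j. j < n div 2 \<Longrightarrow> wprod y j = of_real (s\<^sup>2) * wprod x j"
  obtains \<phi> where "\<And>j. j < n div 2 \<Longrightarrow> wplus y j = of_real s * wplus (torus_act n \<phi> x) j"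
    "\<And>j. j < n div 2 \<Longrightarrow> wminus y j = of_real s * wminus (torus_act n \<phi> x) j"
proof -
  have "\<exists>\<phi>. wplus y j = cis \<phi> * (of_real s * wplus x j) \<and> wminus y j = cis (-\<phi>) * (of_real s * wminus x j)"
    if "j < n div 2" for j
  proof (rule opposite_phases_exist)
    show "(cmod (wplus y j))\<^sup>2 - (cmod (wminus y j))\<^sup>2
        = (cmod (of_real s * wplus x j))\<^sup>2 - (cmod (of_real s * wminus x j))\<^sup>2"
      using gap[OF that] by (simp add: norm_gap_def norm_mult power_mult_distrib algebra_simps)
    show "wplus y j * wminus y j = (of_real s * wplus x j) * (of_real s * wminus x j)"
      using prod[OF that] by (simp add: wprod_def power2_eq_square algebra_simps)
  qed blast
  then obtain \<phi> where "\<And>j. j < n div 2 \<Longrightarrow>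
      wplus y j = cis (\<phi> j) * (of_real s * wplus x j) \<and> wminus y j = cis (- \<phi> j) * (of_real s * wminus x j)"
    by metis
  then show ?thesis by (intro that[of \<phi>]) (simp_all add: wplus_torus_act wminus_torus_act)
qed

lemma orbit_invariant_eq_imp_same_orbit:
  assumes x: "x \<in> stiefel_set n" and y: "y \<in> stiefel_set n"
    and eq: "orbit_invariant n x = orbit_invariant n y"
  shows "\<exists>\<phi> \<theta>. y = so2_act \<theta> (torus_act n \<phi> x)"
proof -
  obtain l u where l: "0 < l" and u: "cmod u = 1"
    and gap: "\<And>j. j < n div 2 \<Longrightarrow> norm_gap y j = l * norm_gap x j"
    and prod: "\<And>j. j < n div 2 \<Longrightarrow> wprod y j = of_real l * u * wprod x j"
    using orbit_invariant_eq_imp_scaled[OF x y eq] by blast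
  define s where "s = sqrt l"
  have s: "0 < s" "s\<^sup>2 = l" using l by (simp_all add: s_def)
  obtain \<nu> where \<nu>: "cmod \<nu> = 1" "\<nu> * \<nu> = u"
    and last: "odd n \<Longrightarrow> cvec y (n - 1) = \<nu> * (of_real s * cvec x (n - 1))"
    using last_coordinate_phase[OF x y u] prod s(2) by metis
  \<comment> \<open>rotate the frame by a square root of the common phase, then match the blocks by the torus\<close>
  define x1 where "x1 = so2_act (- Arg \<nu>) x"
  have x1: "x1 \<in> stiefel_set n" using so2_act_in_stiefel_set[OF x] by (simp add: x1_def)
  have "wplus x1 j = \<nu> * wplus x j" "wminus x1 j = \<nu> * wminus x j" for j
    by (simp_all add: x1_def wplus_so2_act wminus_so2_act cis_Arg_unit[OF \<nu>(1)])
  then have "norm_gap y j = s\<^sup>2 * norm_gap x1 j" "wprod y j = of_real (s\<^sup>2) * wprod x1 j"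
    if "j < n div 2" for j
    using gap[OF that] prod[OF that] \<nu> s(2)
    by (simp_all add: norm_gap_def wprod_def norm_mult algebra_simps)
  then obtain \<phi> where plus: "\<And>j. j < n div 2 \<Longrightarrow> wplus y j = of_real s * wplus (torus_act n \<phi> x1) j"
    and minus: "\<And>j. j < n div 2 \<Longrightarrow> wminus y j = of_real s * wminus (torus_act n \<phi> x1) j"
    by (metis torus_act_match_blocks)
  have "odd n \<Longrightarrow> 2 * (n div 2) \<le> n - 1" by presburger
  then have "odd n \<Longrightarrow> cvec y (n - 1) = of_real s * cvec (torus_act n \<phi> x1) (n - 1)"
    using last by (simp add: cvec_torus_act_fixed x1_def cvec_so2_act cis_Arg_unit[OF \<nu>(1)])
  then have "cvec y i = of_real s * cvec (torus_act n \<phi> x1) i" for i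
    using cvec_scaled_if_blocks_scaled[OF torus_act_in_stiefel_set[OF x1] y plus minus] by blast
  then have "y = torus_act n \<phi> x1"
    by (rule stiefel_set_eq_if_cvec_scaled[OF torus_act_in_stiefel_set[OF x1] y s(1)])
  then show ?thesis by (auto simp: x1_def torus_act_so2_act)
qed

lemma continuous_on_cvec: "continuous_on S (\<lambda>x. cvec x i)"
proof -
  have "continuous_on S (\<lambda>x. complex_of_real (fst x i) + \<i> * complex_of_real (snd x i))"
    by (intro continuous_intros continuous_on_id)
  then show ?thesis by (simp add: cvec_def Complex_eq)
qed

lemma continuous_on_norm_gap: "continuous_on S (\<lambda>x. norm_gap x j)"
  unfolding norm_gap_def wplus_def wminus_def by (intro continuous_intros continuous_on_cvec)

lemma continuous_on_wprod: "continuous_on S (\<lambda>x. wprod x j)"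
  unfolding wprod_def wplus_def wminus_def by (intro continuous_intros continuous_on_cvec)

lemma continuous_on_orbit_invariant: "continuous_on (stiefel_set n) (orbit_invariant n)"
proof -
  have w: "continuous_on (stiefel_set n) (frame_weight n)"
    unfolding frame_weight_def[abs_def]
    by (intro continuous_on_weight continuous_on_norm_gap continuous_on_wprod)
  have "continuous_on (stiefel_set n) (\<lambda>x. forget_phase (n div 2)
      (\<lambda>j. norm_gap x j / frame_weight n x) (\<lambda>j. wprod x j / of_real (frame_weight n x)))"
    using frame_weight_pos
    by (intro continuous_on_forget_phase continuous_on_divide continuous_on_of_real
        continuous_on_norm_gap continuous_on_wprod w) force+
  then show ?thesis unfolding orbit_invariant_def[abs_def] .
qed

lemma grass2_mod_torus_homeomorphic_orbit_invariant_image: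
  "grass2_mod_torus n homeomorphic_space top_of_set (orbit_invariant n ` stiefel_set n)"
proof -
  have "grass2_mod_torus n homeomorphic_space
      subtopology euclidean (orbit_invariant n ` topspace (stiefel2 n))"
  proof (rule homeomorphic_space_quotient_image[OF quotient_map_orbit_map])
    show "continuous_map (stiefel2 n) euclidean (orbit_invariant n)"
      by (simp add: stiefel2_eq_top_of_set continuous_on_orbit_invariant)
    fix x y assume "x \<in> topspace (stiefel2 n)" "y \<in> topspace (stiefel2 n)"
    then have xy: "x \<in> stiefel_set n" "y \<in> stiefel_set n" by simp_all
    show "orbit_invariant n x = orbit_invariant n y \<longleftrightarrow> orbit_map n x = orbit_map n y"
    proof
      assume "orbit_invariant n x = orbit_invariant n y"
      then show "orbit_map n x = orbit_map n y"
        using orbit_invariant_eq_imp_same_orbit[OF xy] orbit_map_eq_iff[OF xy] by blast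
    next
      assume "orbit_map n x = orbit_map n y"
      then obtain \<phi> \<theta> where "y = so2_act \<theta> (torus_act n \<phi> x)" using orbit_map_eq_iff[OF xy] by blast
      then show "orbit_invariant n x = orbit_invariant n y" by (simp add: orbit_invariant_action)
    qed
  next
    show "compactin (stiefel2 n) (topspace (stiefel2 n))"
      by (simp add: stiefel2_eq_top_of_set compact_stiefel_set)
    show "orbit_map n ` topspace (stiefel2 n) = topspace (grass2_mod_torus n)"
      using quotient_map_orbit_map[of n] by (simp add: quotient_map_def)
  qed simp
  then show ?thesis by simp
qed

text \<open>For even \<open>n\<close> the condition \<open>\<Sum> z\<^sub>i\<^sup>2 = 0\<close> says \<open>\<Sum> c\<^sub>j = 0\<close>; for odd \<open>n\<close> the last
  coordinate \<open>z\<^sub>n\<^sub>-\<^sub>1\<close> absorbs any value of the sum, so there is no condition.\<close>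
definition sum_constraint :: "nat \<Rightarrow> (nat \<Rightarrow> complex) \<Rightarrow> bool" where
  "sum_constraint n c \<longleftrightarrow> (even n \<longrightarrow> (\<Sum>j<n div 2. c j) = 0)"

definition model_set :: "nat \<Rightarrow> ((nat \<Rightarrow> real) \<times> (nat \<times> nat \<Rightarrow> complex)) set" where
  "model_set n = {forget_phase (n div 2) D c | D c. sum_constraint n c \<and> weight (n div 2) D c = 1}"

lemma orbit_invariant_in_model_set:
  assumes x: "x \<in> stiefel_set n" shows "orbit_invariant n x \<in> model_set n"
proof -
  let ?r = "frame_weight n x"
  have r: "0 < ?r" using frame_weight_pos[OF x] .
  have "even n \<Longrightarrow> (\<Sum>j<n div 2. wprod x j) = 0"
    using x sum_cvec_square_eq_sum_wprod[of x n] by (simp add: stiefel_set_iff_cvec)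
  then have "sum_constraint n (\<lambda>j. wprod x j / of_real ?r)"
    unfolding sum_constraint_def by (simp flip: sum_divide_distrib)
  moreover have "weight (n div 2) (\<lambda>j. norm_gap x j / ?r) (\<lambda>j. wprod x j / of_real ?r) = 1"
  proof -
    have "weight (n div 2) (\<lambda>j. norm_gap x j / ?r) (\<lambda>j. wprod x j / of_real ?r) =
        weight (n div 2) (\<lambda>j. (1 / ?r) * norm_gap x j) (\<lambda>j. of_real (1 / ?r) * wprod x j)"
      by (simp add: field_simps)
    also have "\<dots> = 1" using r by (subst weight_scale) (simp_all add: frame_weight_def)
    finally show ?thesis .
  qed
  ultimately show ?thesis
    unfolding model_set_def orbit_invariant_def by blast
qed

lemma block_with_invariants:
  fixes D :: real and c :: complex
  obtains W W' where "(cmod W)\<^sup>2 - (cmod W')\<^sup>2 = D" "W * W' = c"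
proof -
  define r where "r = sqrt (D\<^sup>2 + 4 * (cmod c)\<^sup>2)"
  define P Q where "P = sqrt ((r + D) / 2)" and "Q = sqrt ((r - D) / 2)"
  have "sqrt (D\<^sup>2) \<le> r" unfolding r_def by (intro real_sqrt_le_mono) simp
  then have rD: "\<bar>D\<bar> \<le> r" by simp
  have P2: "P\<^sup>2 = (r + D) / 2" and Q2: "Q\<^sup>2 = (r - D) / 2" using rD by (simp_all add: P_def Q_def)
  have "r\<^sup>2 = D\<^sup>2 + 4 * (cmod c)\<^sup>2" unfolding r_def by simp
  \<comment> \<open>\<open>W = P\<close>, \<open>|W'| = Q\<close> with \<open>P\<^sup>2 - Q\<^sup>2 = D\<close> and \<open>P Q = |c|\<close>\<close>
  then have PQ: "P\<^sup>2 * Q\<^sup>2 = (cmod c)\<^sup>2" unfolding P2 Q2 by (simp add: field_simps power2_eq_square)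
  show ?thesis
  proof (cases "P = 0")
    case True
    then have "c = 0" "r + D = 0" using PQ P2 by simp_all
    then show ?thesis using True Q2 by (intro that[of 0 "of_real Q"]) simp_all
  next
    case False
    have "(cmod (c / of_real P))\<^sup>2 = Q\<^sup>2"
      using False PQ by (simp add: norm_divide power_divide field_simps)
    then show ?thesis using False P2 Q2 by (intro that[of "of_real P" "c / of_real P"]) simp_all
  qed
qed

lemma isotropic_vector_with_blocks:
  assumes con: "sum_constraint n (\<lambda>j. W j * W' j)"
  obtains z where "\<And>i. n \<le> i \<Longrightarrow> z i = 0" "(\<Sum>i<n. (z i)\<^sup>2) = 0"
    "\<And>j. j < n div 2 \<Longrightarrow> z (2*j) + \<i> * z (Suc (2*j)) = W j"
    "\<And>j. j < n div 2 \<Longrightarrow> z (2*j) - \<i> * z (Suc (2*j)) = W' j"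
proof -
  let ?k = "n div 2"
  \<comment> \<open>for odd \<open>n\<close> the last coordinate solves \<open>\<Sum> z\<^sub>i\<^sup>2 = 0\<close>\<close>
  define z where "z i = (if i < 2 * ?k then
      (if even i then (W (i div 2) + W' (i div 2)) / 2 else (W (i div 2) - W' (i div 2)) / (2 * \<i>))
     else if odd n \<and> i = 2 * ?k then csqrt (- (\<Sum>j<?k. W j * W' j)) else 0)" for i
  have z_even: "z (2*j) = (W j + W' j) / 2" and z_odd: "z (Suc (2*j)) = (W j - W' j) / (2 * \<i>)"
    if "j < ?k" for j
    using that by (simp_all add: z_def)
  have "(\<Sum>i<n. (z i)\<^sup>2) = (\<Sum>j<?k. W j * W' j) + (if odd n then (z (n - 1))\<^sup>2 else 0)"
  proof -
    have "(z (2*j))\<^sup>2 + (z (Suc (2*j)))\<^sup>2 = W j * W' j" if "j < ?k" for j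
      using that by (simp only: z_even z_odd) (simp add: field_simps power2_eq_square)
    then show ?thesis by (subst sum_lessThan_pairs) simp
  qed
  also have "\<dots> = 0"
  proof -
    have "odd n \<Longrightarrow> n - 1 = 2 * ?k" by presburger
    then show ?thesis using con by (auto simp: sum_constraint_def z_def)
  qed
  finally have sq: "(\<Sum>i<n. (z i)\<^sup>2) = 0" .
  show ?thesis
  proof (rule that[of z])
    show "z i = 0" if "n \<le> i" for i using that by (auto simp: z_def)
    show "(\<Sum>i<n. (z i)\<^sup>2) = 0" by (fact sq)
    show "z (2*j) + \<i> * z (Suc (2*j)) = W j" "z (2*j) - \<i> * z (Suc (2*j)) = W' j"
      if "j < ?k" for j
      using that by (simp_all only: z_even z_odd) (simp_all add: field_simps)
  qed
qed

lemma frame_of_isotropic_vector: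
  assumes high: "\<And>i. n \<le> i \<Longrightarrow> z i = 0" and sq: "(\<Sum>i<n. (z i)\<^sup>2) = 0"
    and nonzero: "i0 < n" "z i0 \<noteq> 0"
  obtains s where "0 < s" "frame_of_cvec (\<lambda>i. of_real s * z i) \<in> stiefel_set n"
proof -
  define N where "N = (\<Sum>i<n. (cmod (z i))\<^sup>2)"
  have "0 < N" unfolding N_def using nonzero by (intro sum_pos2[of _ i0]) auto
  define s where "s = sqrt (2 / N)"
  have s: "0 < s" "s * s * N = 2" using \<open>0 < N\<close> by (simp_all add: s_def)
  have "(\<Sum>i<n. (of_real s * z i)\<^sup>2) = 0"
    using sq by (simp add: power_mult_distrib flip: sum_distrib_left)
  moreover have "(\<Sum>i<n. (cmod (of_real s * z i))\<^sup>2) = s * s * N"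
    using s(1) by (simp add: N_def norm_mult power_mult_distrib sum_distrib_left
        power2_eq_square mult_ac)
  ultimately show ?thesis
    using s high by (intro that[of s]) (simp_all add: stiefel_set_iff_cvec)
qed

lemma frame_with_invariants:
  assumes con: "sum_constraint n c" and nonzero: "j0 < n div 2" "D j0 \<noteq> 0 \<or> c j0 \<noteq> 0"
  obtains x t where "x \<in> stiefel_set n" "0 < t"
    "\<And>j. j < n div 2 \<Longrightarrow> norm_gap x j = t * D j"
    "\<And>j. j < n div 2 \<Longrightarrow> wprod x j = of_real t * c j"
proof -
  let ?k = "n div 2"
  have "\<exists>V V'. (cmod V)\<^sup>2 - (cmod V')\<^sup>2 = D j \<and> V * V' = c j" for j
    by (rule block_with_invariants) blast
  then obtain W W' where W: "\<And>j. (cmod (W j))\<^sup>2 - (cmod (W' j))\<^sup>2 = D j" "\<And>j. W j * W' j = c j"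
    by metis
  have "sum_constraint n (\<lambda>j. W j * W' j)" using con by (simp add: W(2))
  then obtain z where high: "\<And>i. n \<le> i \<Longrightarrow> z i = 0" and sq: "(\<Sum>i<n. (z i)\<^sup>2) = 0"
    and plus: "\<And>j. j < ?k \<Longrightarrow> z (2*j) + \<i> * z (Suc (2*j)) = W j"
    and minus: "\<And>j. j < ?k \<Longrightarrow> z (2*j) - \<i> * z (Suc (2*j)) = W' j"
    by (rule isotropic_vector_with_blocks) (rule that)
  have "W j0 \<noteq> 0 \<or> W' j0 \<noteq> 0" using nonzero(2) W[of j0] by auto
  then have "z (2*j0) \<noteq> 0 \<or> z (Suc (2*j0)) \<noteq> 0" using plus[OF nonzero(1)] minus[OF nonzero(1)] by auto
  moreover have "2*j0 < n" "Suc (2*j0) < n" using nonzero(1) by presburger+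
  ultimately obtain i0 where "i0 < n" "z i0 \<noteq> 0" by blast
  then obtain s where s: "0 < s" and x: "frame_of_cvec (\<lambda>i. of_real s * z i) \<in> stiefel_set n"
    using frame_of_isotropic_vector[OF high sq] by metis
  let ?x = "frame_of_cvec (\<lambda>i. of_real s * z i)"
  have "wplus ?x j = of_real s * (z (2*j) + \<i> * z (Suc (2*j)))"
    "wminus ?x j = of_real s * (z (2*j) - \<i> * z (Suc (2*j)))" for j
    by (simp_all add: wplus_def wminus_def algebra_simps)
  then have "wplus ?x j = of_real s * W j" "wminus ?x j = of_real s * W' j" if "j < ?k" for j
    using plus[OF that] minus[OF that] by simp_all
  then have "norm_gap ?x j = (s * s) * D j" "wprod ?x j = of_real (s * s) * c j" if "j < ?k" for j
    using that W[of j] s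
    by (simp_all add: norm_gap_def wprod_def norm_mult power_mult_distrib power2_eq_square
        algebra_simps flip: W(1))
  then show ?thesis using x s by (intro that[of ?x "s * s"]) simp_all
qed

lemma model_set_subset_orbit_invariant_image: "model_set n \<subseteq> orbit_invariant n ` stiefel_set n"
proof
  fix P assume "P \<in> model_set n"
  then obtain D c where P: "P = forget_phase (n div 2) D c"
    and con: "sum_constraint n c" and w: "weight (n div 2) D c = 1"
    by (auto simp: model_set_def)
  then obtain j where "j < n div 2" "D j \<noteq> 0 \<or> c j \<noteq> 0"
    using weight_eq_0_iff[of "n div 2" D c] by auto
  then obtain x t where x: "x \<in> stiefel_set n" and t: "0 < t"
    and gap: "\<And>j. j < n div 2 \<Longrightarrow> norm_gap x j = t * D j"
    and prod: "\<And>j. j < n div 2 \<Longrightarrow> wprod x j = of_real t * c j"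
    using frame_with_invariants con by metis
  have "frame_weight n x = weight (n div 2) (\<lambda>j. t * D j) (\<lambda>j. of_real t * c j)"
    unfolding frame_weight_def using gap prod by (intro weight_cong) simp_all
  also have "\<dots> = t" using t w by (simp add: weight_scale)
  finally have "orbit_invariant n x = P"
    unfolding orbit_invariant_def P using gap prod t by (intro forget_phase_cong) simp_all
  then show "P \<in> orbit_invariant n ` stiefel_set n" using x by blast
qed

lemma orbit_invariant_image: "orbit_invariant n ` stiefel_set n = model_set n"
  using orbit_invariant_in_model_set model_set_subset_orbit_invariant_image by blast

section \<open>The join side\<close>

lemma equiv_join_rel: "equiv (topspace X) (qrel X join_rel)"
  by (rule equiv_qrelI) (auto simp: join_rel_def)

lemma join_top_empty:
  fixes X :: "'a topology" and Y :: "'b topology"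
  assumes "topspace Y = {}"
  shows "join_top X Y homeomorphic_space X"
proof -
  let ?P = "prod_topology (discrete_topology {undefined :: 'b}) (subtopology euclideanreal {1})"
  have "join_top X Y = quotient_top (prod_topology X ?P) join_rel"
    using assms by (simp add: join_top_def)
  also have "\<dots> homeomorphic_space prod_topology X ?P"
    by (rule quotient_top_homeomorphic_space_self[OF equiv_join_rel]) (auto simp: join_rel_def)
  finally have first: "join_top X Y homeomorphic_space prod_topology X ?P" .
  have "?P = discrete_topology {(undefined, 1)}"
    by (simp add: subtopology_eq_discrete_topology_sing)
  then have "prod_topology X ?P homeomorphic_space X"
    by (rule prod_topology_homeomorphic_space_left)
  with first show ?thesis by (rule homeomorphic_space_trans)
qed

definition nonzero_vecs :: "nat \<Rightarrow> (nat \<Rightarrow> complex) set" where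
  "nonzero_vecs m = {z. (\<forall>i\<ge>m. z i = 0) \<and> (\<exists>i. z i \<noteq> 0)}"

abbreviation proportional :: "(nat \<Rightarrow> complex) \<Rightarrow> (nat \<Rightarrow> complex) \<Rightarrow> bool" where
  "proportional \<equiv> \<lambda>z w. \<exists>c. c \<noteq> 0 \<and> w = (\<lambda>i. c * z i)"

lemma complex_proj_eq_quotient_top:
  "complex_proj m = quotient_top (top_of_set (nonzero_vecs m)) proportional"
  by (simp add: complex_proj_def euclidean_product_topology nonzero_vecs_def)

lemma equiv_proportional: "equiv (topspace (top_of_set (nonzero_vecs m))) (qrel (top_of_set (nonzero_vecs m)) proportional)"
proof (rule equiv_qrelI)
  fix z show "proportional z z" by (rule exI[of _ 1]) simp
next
  fix z w assume "proportional z w"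
  then obtain c where "c \<noteq> 0" "w = (\<lambda>i. c * z i)" by blast
  then have "inverse c \<noteq> 0" "z = (\<lambda>i. inverse c * w i)" by (simp_all add: field_simps)
  then show "proportional w z" by blast
next
  fix z w v assume "proportional z w" "proportional w v"
  then obtain c d where "c \<noteq> 0" "w = (\<lambda>i. c * z i)" "d \<noteq> 0" "v = (\<lambda>i. d * w i)" by blast
  then have "d * c \<noteq> 0" "v = (\<lambda>i. (d * c) * z i)" by (simp_all add: mult.assoc)
  then show "proportional z v" by blast
qed

lemma topspace_complex_proj:
  "topspace (complex_proj m) = nonzero_vecs m // qrel (top_of_set (nonzero_vecs m)) proportional"
  unfolding complex_proj_eq_quotient_top using topspace_quotient_top[OF equiv_proportional] by simp

lemma topspace_complex_proj_eq_empty_iff: "topspace (complex_proj m) = {} \<longleftrightarrow> m = 0"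
proof -
  have "nonzero_vecs 0 = {}" by (auto simp: nonzero_vecs_def)
  moreover have "(\<lambda>i. if i = 0 then 1 else 0) \<in> nonzero_vecs m" if "m \<noteq> 0"
    using that by (auto simp: nonzero_vecs_def)
  ultimately have "nonzero_vecs m = {} \<longleftrightarrow> m = 0" by (cases "m = 0") auto
  then show ?thesis by (simp add: topspace_complex_proj)
qed

definition proj_class :: "nat \<Rightarrow> (nat \<Rightarrow> complex) \<Rightarrow> (nat \<Rightarrow> complex) set" where
  "proj_class m = quotient_class (top_of_set (nonzero_vecs m)) proportional"

lemma quotient_map_proj_class: "quotient_map (top_of_set (nonzero_vecs m)) (complex_proj m) (proj_class m)"
  unfolding complex_proj_eq_quotient_top proj_class_def
  by (rule quotient_map_quotient_class[OF equiv_proportional])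

lemma proj_class_eq_iff:
  "z \<in> nonzero_vecs m \<Longrightarrow> w \<in> nonzero_vecs m \<Longrightarrow> proj_class m z = proj_class m w \<longleftrightarrow> proportional z w"
  unfolding proj_class_def by (rule quotient_class_eq_iff[OF equiv_proportional]) simp_all

lemma L2_set_abs: "L2_set (\<lambda>i. \<bar>f i\<bar>) A = L2_set f A"
  by (simp add: L2_set_def)

definition unit_sphere_set :: "nat \<Rightarrow> (nat \<Rightarrow> 'a::real_normed_vector) set" where
  "unit_sphere_set k = {x. L2_set (\<lambda>i. norm (x i)) {..<k} = 1 \<and> (\<forall>i\<ge>k. x i = 0)}"

lemma nsphere_eq_top_of_set:
  assumes "1 \<le> k" shows "nsphere (k - 1) = top_of_set (unit_sphere_set k)"
proof -
  have "{..k - 1} = {..<k}" using assms by auto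
  then have "{x. (\<Sum>i\<le>k - 1. x i ^ 2) = 1 \<and> (\<forall>i>k - 1. x i = (0::real))} = unit_sphere_set k"
    using assms by (auto simp: unit_sphere_set_def L2_set_def)
  then show ?thesis by (simp add: nsphere euclidean_product_topology)
qed

lemma compact_unit_sphere_set:
  "compact (unit_sphere_set k :: (nat \<Rightarrow> 'a::{real_normed_vector, heine_borel}) set)"
proof -
  let ?B = "Pi\<^sub>E UNIV (\<lambda>i::nat. cball (0::'a) 1)"
  have "unit_sphere_set k = {x. \<forall>i\<ge>k. x i = 0} \<inter> {x :: nat \<Rightarrow> 'a. L2_set (\<lambda>i. norm (x i)) {..<k} = 1}"
    by (auto simp: unit_sphere_set_def)
  moreover have "closed {x :: nat \<Rightarrow> 'a. L2_set (\<lambda>i. norm (x i)) {..<k} = 1}"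
    unfolding L2_set_def by (intro closed_Collect_eq continuous_intros)
  ultimately have closed: "closed (unit_sphere_set k :: (nat \<Rightarrow> 'a) set)"
    by (simp add: closed_Int closed_vanishing_beyond)
  have "unit_sphere_set k \<subseteq> ?B"
  proof
    fix x :: "nat \<Rightarrow> 'a" assume x: "x \<in> unit_sphere_set k"
    have "norm (x i) \<le> 1" for i
      using x member_le_L2_set[of "{..<k}" i "\<lambda>i. norm (x i)"]
      by (cases "i < k") (auto simp: unit_sphere_set_def)
    then show "x \<in> ?B" by auto
  qed
  then have "unit_sphere_set k = ?B \<inter> unit_sphere_set k" by blast
  also have "compact \<dots>"
    by (intro compact_Int_closed compact_PiE_UNIV compact_cball closed)
  finally show ?thesis .
qed

lemma proj_class_unit_representative:
  assumes z: "z \<in> nonzero_vecs m"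
  obtains w where "w \<in> unit_sphere_set m" "proportional z w"
proof -
  define N where "N = L2_set (\<lambda>i. cmod (z i)) {..<m}"
  obtain i where i: "z i \<noteq> 0" "i < m" using z by (auto simp: nonzero_vecs_def) (meson not_le)
  then have "0 < cmod (z i)" by simp
  also have "\<dots> \<le> N" unfolding N_def using i(2) by (intro member_le_L2_set) auto
  finally have "0 < N" .
  define w where "w = (\<lambda>i. complex_of_real (1 / N) * z i)"
  have "L2_set (\<lambda>i. cmod (w i)) {..<m} = L2_set (\<lambda>i. (1 / N) * cmod (z i)) {..<m}"
    using \<open>0 < N\<close> by (intro L2_set_cong) (simp_all add: w_def norm_mult norm_divide)
  also have "\<dots> = (1 / N) * N"
    unfolding N_def by (subst L2_set_right_distrib[symmetric]) simp_all
  finally have "w \<in> unit_sphere_set m"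
    using z \<open>0 < N\<close> by (simp add: unit_sphere_set_def nonzero_vecs_def w_def)
  moreover have "proportional z w"
    using \<open>0 < N\<close> by (intro exI[of _ "complex_of_real (1 / N)"]) (simp add: w_def)
  ultimately show ?thesis by (rule that)
qed

lemma unit_sphere_set_subset_nonzero_vecs: "unit_sphere_set m \<subseteq> nonzero_vecs m"
proof
  fix z :: "nat \<Rightarrow> complex" assume z: "z \<in> unit_sphere_set m"
  have "\<not> (\<forall>i. z i = 0)"
  proof
    assume "\<forall>i. z i = 0"
    then have "L2_set (\<lambda>i. norm (z i)) {..<m} = 0" by (simp add: L2_set_0')
    with z show False by (simp add: unit_sphere_set_def)
  qed
  then show "z \<in> nonzero_vecs m" using z by (simp add: unit_sphere_set_def nonzero_vecs_def)
qed

definition class_coords :: "nat \<Rightarrow> 'a \<times> (nat \<Rightarrow> complex) \<times> real \<Rightarrow> 'a \<times> (nat \<Rightarrow> complex) set \<times> real" where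
  "class_coords m = (\<lambda>(a, z, t). (a, proj_class m z, t))"

lemma quotient_map_class_coords:
  assumes "compact_space X" "Hausdorff_space X"
  shows "quotient_map (prod_topology X (prod_topology (top_of_set (nonzero_vecs m)) (top_of_set {0..1::real})))
      (prod_topology X (prod_topology (complex_proj m) (top_of_set {0..1::real}))) (class_coords m)"
proof -
  have "quotient_map (prod_topology (top_of_set (nonzero_vecs m)) (top_of_set {0..1::real}))
      (prod_topology (complex_proj m) (top_of_set {0..1::real})) (\<lambda>(z, t). (proj_class m z, t))"
    by (rule quotient_map_prod_left[OF _ _ quotient_map_proj_class])
       (simp_all add: compact_imp_locally_compact_space compact_space_subtopology
         Hausdorff_space_subtopology)
  then have "quotient_map (prod_topology X (prod_topology (top_of_set (nonzero_vecs m)) (top_of_set {0..1::real})))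
      (prod_topology X (prod_topology (complex_proj m) (top_of_set {0..1::real})))
      (\<lambda>(x, y). (x, (\<lambda>(z, t). (proj_class m z, t)) y))"
    using quotient_map_prod_right[OF compact_imp_locally_compact_space[OF assms(1)]] assms(2) by blast
  then show ?thesis by (rule quotient_map_eq) (auto simp: class_coords_def)
qed

section \<open>Parametrising the model set by the join\<close>

text \<open>The projective factor has \<open>\<lceil>n/2\<rceil> - 1\<close> homogeneous coordinates: all \<open>k = n div 2\<close>
  coordinates of \<open>c\<close> when \<open>n\<close> is odd, and all but the last when \<open>n\<close> is even, the last one
  then being fixed by the sum constraint.\<close>
definition proj_coords :: "nat \<Rightarrow> nat" where
  "proj_coords n = (n + 1) div 2 - 1"

lemma proj_coords_le: "proj_coords n \<le> n div 2"
  unfolding proj_coords_def by presburger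

lemma proj_coords_odd: "odd n \<Longrightarrow> proj_coords n = n div 2"
  unfolding proj_coords_def by presburger

lemma proj_coords_even: "even n \<Longrightarrow> proj_coords n = n div 2 - 1"
  unfolding proj_coords_def by presburger

definition constrained_ext :: "nat \<Rightarrow> (nat \<Rightarrow> complex) \<Rightarrow> nat \<Rightarrow> complex" where
  "constrained_ext n z j = (if j < proj_coords n then z j
     else if even n \<and> j = proj_coords n then - (\<Sum>i<proj_coords n. z i) else 0)"

definition normalized_ext :: "nat \<Rightarrow> (nat \<Rightarrow> complex) \<Rightarrow> nat \<Rightarrow> complex" where
  "normalized_ext n z j =
     constrained_ext n z j / of_real (L2_set (\<lambda>j. cmod (constrained_ext n z j)) {..<n div 2})"

definition join_param :: "nat \<Rightarrow> (nat \<Rightarrow> real) \<times> (nat \<Rightarrow> complex) \<times> real \<Rightarrow>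
    (nat \<Rightarrow> real) \<times> (nat \<times> nat \<Rightarrow> complex)" where
  "join_param n = (\<lambda>(a, z, t).
     forget_phase (n div 2) (\<lambda>j. t * a j) (\<lambda>j. of_real (1 - t) * normalized_ext n z j))"

lemma join_param_simps:
  "join_param n (a, z, t) =
     forget_phase (n div 2) (\<lambda>j. t * a j) (\<lambda>j. of_real (1 - t) * normalized_ext n z j)"
  by (simp add: join_param_def)

lemma constrained_ext_scale: "constrained_ext n (\<lambda>i. c * z i) j = c * constrained_ext n z j"
  by (simp add: constrained_ext_def sum_distrib_left)

lemma sum_constraint_constrained_ext: "sum_constraint n (\<lambda>j. a * constrained_ext n z j)"
proof -
  have "(\<Sum>j<n div 2. constrained_ext n z j) = 0" if "even n"
  proof (cases "n div 2")
    case (Suc k)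
    then have "proj_coords n = k" using proj_coords_even[OF that] by simp
    then show ?thesis using that Suc by (simp add: constrained_ext_def)
  qed simp
  then show ?thesis by (simp add: sum_constraint_def flip: sum_distrib_left)
qed

lemma constrained_ext_restrict:
  assumes "sum_constraint n c" "j < n div 2"
  shows "constrained_ext n (\<lambda>i. if i < proj_coords n then c i else 0) j = c j"
proof (cases "j < proj_coords n")
  case False
  then have e: "even n" and j: "j = proj_coords n"
    using assms(2) proj_coords_odd[of n] proj_coords_even[of n] by (cases "even n"; simp)+
  then have "n div 2 = Suc (proj_coords n)" using assms(2) proj_coords_even[OF e] by simp
  then have "c j = - (\<Sum>i<proj_coords n. c i)"
    using assms(1) e j by (simp add: sum_constraint_def eq_neg_iff_add_eq_0 add.commute)
  then show ?thesis using e j by (simp add: constrained_ext_def)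
qed (simp add: constrained_ext_def)

lemma L2_set_constrained_ext_pos:
  assumes "z \<in> nonzero_vecs (proj_coords n)"
  shows "0 < L2_set (\<lambda>j. cmod (constrained_ext n z j)) {..<n div 2}"
proof -
  obtain i where i: "z i \<noteq> 0" "i < proj_coords n"
    using assms by (auto simp: nonzero_vecs_def) (meson not_le)
  then have "0 < cmod (constrained_ext n z i)" by (simp add: constrained_ext_def)
  also have "\<dots> \<le> L2_set (\<lambda>j. cmod (constrained_ext n z j)) {..<n div 2}"
    using i(2) proj_coords_le[of n] by (intro member_le_L2_set) auto
  finally show ?thesis .
qed

lemma L2_set_normalized_ext:
  assumes "z \<in> nonzero_vecs (proj_coords n)"
  shows "L2_set (\<lambda>j. cmod (normalized_ext n z j)) {..<n div 2} = 1"
proof -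
  let ?N = "L2_set (\<lambda>j. cmod (constrained_ext n z j)) {..<n div 2}"
  have N: "0 < ?N" using L2_set_constrained_ext_pos[OF assms] .
  have "L2_set (\<lambda>j. cmod (normalized_ext n z j)) {..<n div 2}
      = L2_set (\<lambda>j. (1 / ?N) * cmod (constrained_ext n z j)) {..<n div 2}"
    using N by (intro L2_set_cong) (simp_all add: normalized_ext_def norm_divide)
  also have "\<dots> = (1 / ?N) * ?N" by (subst L2_set_right_distrib[symmetric]) simp_all
  finally show ?thesis using N by simp
qed

lemma normalized_ext_scale:
  assumes "c \<noteq> 0"
  shows "normalized_ext n (\<lambda>i. c * z i) j = (c / of_real (cmod c)) * normalized_ext n z j"
  using assms
  by (simp add: normalized_ext_def constrained_ext_scale norm_mult L2_set_right_distrib[symmetric]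
      field_simps)

abbreviation join_domain :: "nat \<Rightarrow> ((nat \<Rightarrow> real) \<times> (nat \<Rightarrow> complex) \<times> real) set" where
  "join_domain n \<equiv> unit_sphere_set (n div 2) \<times> nonzero_vecs (proj_coords n) \<times> {0..1}"

lemma join_param_in_model_set:
  assumes "p \<in> join_domain n" shows "join_param n p \<in> model_set n"
proof -
  obtain a z t where p: "p = (a, z, t)" by (metis prod.collapse)
  have a: "L2_set a {..<n div 2} = 1" and z: "z \<in> nonzero_vecs (proj_coords n)" and t: "0 \<le> t" "t \<le> 1"
    using assms by (auto simp: p unit_sphere_set_def L2_set_abs)
  let ?N = "L2_set (\<lambda>j. cmod (constrained_ext n z j)) {..<n div 2}"
  have "(\<lambda>j. of_real (1 - t) * normalized_ext n z j) = (\<lambda>j. (of_real (1 - t) / of_real ?N) * constrained_ext n z j)"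
    by (simp add: normalized_ext_def fun_eq_iff)
  then have "sum_constraint n (\<lambda>j. of_real (1 - t) * normalized_ext n z j)"
    by (simp only: sum_constraint_constrained_ext)
  moreover have "weight (n div 2) (\<lambda>j. t * a j) (\<lambda>j. of_real (1 - t) * normalized_ext n z j) = 1"
  proof -
    have "cmod (of_real (1 - t)) = 1 - t" using t by (simp only: norm_of_real abs_of_nonneg diff_ge_0_iff_ge)
    then show ?thesis using a t L2_set_normalized_ext[OF z]
      by (simp only: weight_def norm_mult L2_set_right_distrib[symmetric] abs_mult) simp
  qed
  ultimately show ?thesis unfolding model_set_def p join_param_def by auto
qed

lemma scaled_unit_sphere_eq_iff:
  fixes a b :: "nat \<Rightarrow> real"
  assumes "a \<in> unit_sphere_set k" "b \<in> unit_sphere_set k" "0 \<le> t" "0 \<le> r"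
  shows "(\<forall>j<k. r * b j = t * a j) \<longleftrightarrow> t = r \<and> (t = 0 \<or> a = b)"
proof
  assume eq: "\<forall>j<k. r * b j = t * a j"
  have "L2_set (\<lambda>j. r * b j) {..<k} = L2_set (\<lambda>j. t * a j) {..<k}"
    using eq by (intro L2_set_cong) auto
  then have "r * L2_set b {..<k} = t * L2_set a {..<k}"
    using assms(3,4) by (simp add: L2_set_right_distrib)
  then have "t = r" using assms by (simp add: unit_sphere_set_def L2_set_abs)
  moreover have "a = b" if "t \<noteq> 0"
  proof
    fix i show "a i = b i"
      using eq \<open>t = r\<close> that assms(1,2) by (cases "i < k") (auto simp: unit_sphere_set_def)
  qed
  ultimately show "t = r \<and> (t = 0 \<or> a = b)" by blast
qed auto

lemma normalized_ext_phase_iff: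
  assumes z: "z \<in> nonzero_vecs (proj_coords n)" and w: "w \<in> nonzero_vecs (proj_coords n)"
  shows "(\<exists>u. cmod u = 1 \<and> (\<forall>j<n div 2. normalized_ext n w j = u * normalized_ext n z j))
    \<longleftrightarrow> proportional z w"
proof
  let ?Nz = "L2_set (\<lambda>j. cmod (constrained_ext n z j)) {..<n div 2}"
  let ?Nw = "L2_set (\<lambda>j. cmod (constrained_ext n w j)) {..<n div 2}"
  assume "\<exists>u. cmod u = 1 \<and> (\<forall>j<n div 2. normalized_ext n w j = u * normalized_ext n z j)"
  then obtain u where u: "cmod u = 1" and h: "\<forall>j<n div 2. normalized_ext n w j = u * normalized_ext n z j"
    by blast
  have Nz: "0 < ?Nz" and Nw: "0 < ?Nw" using L2_set_constrained_ext_pos z w by blast+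
  define c where "c = of_real (?Nw / ?Nz) * u"
  have "w i = c * z i" for i
  proof (cases "i < proj_coords n")
    case True
    then have "constrained_ext n w i = c * constrained_ext n z i"
      using h proj_coords_le[of n] Nz Nw by (simp add: normalized_ext_def c_def field_simps)
    then show ?thesis using True by (simp add: constrained_ext_def)
  next
    case False
    then show ?thesis using z w by (simp add: nonzero_vecs_def)
  qed
  moreover have "c \<noteq> 0" using Nz Nw u by (auto simp: c_def)
  ultimately show "proportional z w" by auto
next
  assume "proportional z w"
  then obtain c where c: "c \<noteq> 0" "w = (\<lambda>i. c * z i)" by blast
  then show "\<exists>u. cmod u = 1 \<and> (\<forall>j<n div 2. normalized_ext n w j = u * normalized_ext n z j)"
    by (intro exI[of _ "c / of_real (cmod c)"]) (simp add: normalized_ext_scale norm_divide)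
qed

lemma join_param_eq_iff:
  assumes "p \<in> join_domain n" "p' \<in> join_domain n"
  shows "join_param n p = join_param n p' \<longleftrightarrow>
    join_rel (class_coords (proj_coords n) p) (class_coords (proj_coords n) p')"
proof -
  let ?k = "n div 2"
  obtain a z t where p: "p = (a, z, t)" by (metis prod.collapse)
  obtain b w r where p': "p' = (b, w, r)" by (metis prod.collapse)
  have a: "a \<in> unit_sphere_set ?k" and z: "z \<in> nonzero_vecs (proj_coords n)" and t: "0 \<le> t" "t \<le> 1"
    using assms(1) by (auto simp: p)
  have b: "b \<in> unit_sphere_set ?k" and w: "w \<in> nonzero_vecs (proj_coords n)" and r: "0 \<le> r" "r \<le> 1"
    using assms(2) by (auto simp: p')
  have "join_param n p = join_param n p' \<longleftrightarrow> (\<forall>j<?k. r * b j = t * a j) \<and>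
      (\<exists>u. cmod u = 1 \<and> (\<forall>j<?k. of_real (1 - r) * normalized_ext n w j
                                  = u * (of_real (1 - t) * normalized_ext n z j)))"
    by (simp add: p p' join_param_def forget_phase_eq_iff)
  also have "\<dots> \<longleftrightarrow> t = r \<and> (t = 0 \<or> a = b) \<and> (t = 1 \<or> proportional z w)"
  proof (cases "t = r")
    case True
    have "(\<exists>u. cmod u = 1 \<and> (\<forall>j<?k. of_real (1 - t) * normalized_ext n w j
                                  = u * (of_real (1 - t) * normalized_ext n z j)))
        \<longleftrightarrow> t = 1 \<or> proportional z w"
    proof (cases "t = 1")
      case True
      then show ?thesis by (auto intro: exI[of _ 1])
    next
      case False
      then have "(\<exists>u. cmod u = 1 \<and> (\<forall>j<?k. of_real (1 - t) * normalized_ext n w j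
                                  = u * (of_real (1 - t) * normalized_ext n z j)))
          \<longleftrightarrow> (\<exists>u. cmod u = 1 \<and> (\<forall>j<?k. normalized_ext n w j = u * normalized_ext n z j))"
        by (simp add: mult.left_commute)
      then show ?thesis using normalized_ext_phase_iff[OF z w] False by simp
    qed
    then show ?thesis using True scaled_unit_sphere_eq_iff[OF a b t(1) r(1)] by auto
  qed (use scaled_unit_sphere_eq_iff[OF a b t(1) r(1)] in blast)
  also have "\<dots> \<longleftrightarrow> join_rel (class_coords (proj_coords n) p) (class_coords (proj_coords n) p')"
    using t by (auto simp: join_rel_def class_coords_def p p' proj_class_eq_iff[OF z w])
  finally show ?thesis .
qed

lemma unit_sphere_scaling:
  fixes D :: "nat \<Rightarrow> real"
  assumes "0 < k"
  obtains a where "a \<in> unit_sphere_set k" "\<And>j. j < k \<Longrightarrow> D j = L2_set D {..<k} * a j"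
proof (cases "L2_set D {..<k} = 0")
  case True
  then have "D j = 0" if "j < k" for j using that by (simp add: L2_set_eq_0_iff)
  moreover have "(\<lambda>i. if i = 0 then 1 else 0 :: real) \<in> unit_sphere_set k"
  proof -
    have "(\<Sum>i<k. (norm (if i = 0 then 1 else 0 :: real))\<^sup>2) = (\<Sum>i<k. if i = 0 then 1 else 0)"
      by (intro sum.cong) auto
    then show ?thesis using assms by (simp add: unit_sphere_set_def L2_set_def)
  qed
  ultimately show ?thesis using True that by auto
next
  case False
  let ?N = "L2_set D {..<k}"
  have N: "0 < ?N" using False L2_set_nonneg[of D "{..<k}"] by linarith
  define a where "a j = (if j < k then D j / ?N else 0)" for j
  have "L2_set (\<lambda>i. norm (a i)) {..<k} = L2_set (\<lambda>j. (1 / ?N) * D j) {..<k}"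
    by (subst L2_set_abs[symmetric]) (intro L2_set_cong, simp_all add: a_def abs_mult)
  also have "\<dots> = (1 / ?N) * ?N" by (subst L2_set_right_distrib[symmetric]) simp_all
  also have "\<dots> = 1" using N by simp
  finally have "a \<in> unit_sphere_set k" by (simp add: unit_sphere_set_def a_def)
  then show ?thesis using N by (intro that[of a]) (simp_all add: a_def)
qed

lemma constrained_scaling:
  assumes con: "sum_constraint n c" and m: "0 < proj_coords n"
  obtains z where "z \<in> nonzero_vecs (proj_coords n)"
    "\<And>j. j < n div 2 \<Longrightarrow> c j = of_real (L2_set (\<lambda>j. cmod (c j)) {..<n div 2}) * normalized_ext n z j"
proof (cases "L2_set (\<lambda>j. cmod (c j)) {..<n div 2} = 0")
  case True
  then have "c j = 0" if "j < n div 2" for j using that by (simp add: L2_set_eq_0_iff)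
  moreover have "(\<lambda>i. if i = 0 then 1 else 0) \<in> nonzero_vecs (proj_coords n)"
    using m by (auto simp: nonzero_vecs_def)
  ultimately show ?thesis using True that by auto
next
  case False
  let ?N = "L2_set (\<lambda>j. cmod (c j)) {..<n div 2}"
  define z where "z i = (if i < proj_coords n then c i else 0)" for i
  have ext: "constrained_ext n z j = c j" if "j < n div 2" for j
    using constrained_ext_restrict[OF con that] by (simp add: z_def[abs_def])
  have "\<exists>i. z i \<noteq> 0"
  proof (rule ccontr)
    assume "\<not> ?thesis"
    then have "z = (\<lambda>_. 0)" by auto
    then have "c j = 0" if "j < n div 2" for j
      using ext[OF that] by (auto simp: constrained_ext_def split: if_splits)
    then show False using False by (simp add: L2_set_0')
  qed
  then have "z \<in> nonzero_vecs (proj_coords n)" by (simp add: nonzero_vecs_def z_def)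
  moreover have "c j = of_real ?N * normalized_ext n z j" if "j < n div 2" for j
  proof -
    have "L2_set (\<lambda>j. cmod (constrained_ext n z j)) {..<n div 2} = ?N"
      by (intro L2_set_cong) (simp_all add: ext)
    then show ?thesis using False unfolding normalized_ext_def ext[OF that] by simp
  qed
  ultimately show ?thesis by (rule that)
qed

lemma model_set_subset_join_param_image:
  assumes m: "0 < proj_coords n"
  shows "model_set n \<subseteq> join_param n ` join_domain n"
proof
  let ?k = "n div 2"
  fix P assume "P \<in> model_set n"
  then obtain D c where P: "P = forget_phase ?k D c"
    and con: "sum_constraint n c" and w: "weight ?k D c = 1"
    by (auto simp: model_set_def)
  obtain a where a: "a \<in> unit_sphere_set ?k" and D: "\<And>j. j < ?k \<Longrightarrow> D j = L2_set D {..<?k} * a j"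
    using unit_sphere_scaling m proj_coords_le[of n] by (metis order_less_le_trans)
  obtain z where z: "z \<in> nonzero_vecs (proj_coords n)"
    and c: "\<And>j. j < ?k \<Longrightarrow> c j = of_real (L2_set (\<lambda>j. cmod (c j)) {..<?k}) * normalized_ext n z j"
    using constrained_scaling[OF con m] by blast
  define t where "t = L2_set D {..<?k}"
  have t: "0 \<le> t" "1 - t = L2_set (\<lambda>j. cmod (c j)) {..<?k}"
    using w by (simp_all add: t_def weight_def)
  then have "t \<le> 1" by (metis L2_set_nonneg diff_ge_0_iff_ge)
  have "join_param n (a, z, t) = P"
    unfolding join_param_simps P using D c by (intro forget_phase_cong) (simp_all add: t_def flip: t(2))
  moreover have "(a, z, t) \<in> join_domain n" using a z t \<open>t \<le> 1\<close> by simp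
  ultimately show "P \<in> join_param n ` join_domain n" by blast
qed

lemma continuous_on_constrained_ext:
  assumes "\<And>i. continuous_on S (\<lambda>p. g p i)"
  shows "continuous_on S (\<lambda>p. constrained_ext n (g p) j)"
proof (cases "j < proj_coords n")
  case True
  then show ?thesis using assms by (simp add: constrained_ext_def)
next
  case False
  show ?thesis
  proof (cases "even n \<and> j = proj_coords n")
    case True
    with False show ?thesis
      by (simp add: constrained_ext_def continuous_on_minus continuous_on_sum assms)
  next
    case False': False
    show ?thesis
      by (simp only: constrained_ext_def if_not_P[OF False] if_not_P[OF False'] continuous_on_const)
  qed
qed

lemma continuous_on_join_param: "continuous_on (join_domain n) (join_param n)"
proof -
  let ?S = "join_domain n" and ?N = "\<lambda>p. L2_set (\<lambda>j. cmod (constrained_ext n (fst (snd p)) j)) {..<n div 2}"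
  have ext: "continuous_on ?S (\<lambda>p. constrained_ext n (fst (snd p)) j)" for j
    by (intro continuous_on_constrained_ext continuous_intros continuous_on_id)
  have "continuous_on ?S ?N"
    unfolding L2_set_def by (intro continuous_intros ext)
  moreover have "\<forall>p\<in>?S. complex_of_real (?N p) \<noteq> 0"
    using L2_set_constrained_ext_pos by fastforce
  ultimately have "continuous_on ?S (\<lambda>p. forget_phase (n div 2) (\<lambda>j. snd (snd p) * fst p j)
      (\<lambda>j. of_real (1 - snd (snd p)) * normalized_ext n (fst (snd p)) j))"
    unfolding normalized_ext_def
    by (intro continuous_on_forget_phase continuous_intros continuous_on_id ext) auto
  then show ?thesis by (simp add: join_param_def case_prod_unfold)
qed

lemma class_coords_unit_sphere_image:
  "class_coords m ` (A \<times> unit_sphere_set m \<times> B) = class_coords m ` (A \<times> nonzero_vecs m \<times> B)"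
proof
  show "class_coords m ` (A \<times> unit_sphere_set m \<times> B) \<subseteq> class_coords m ` (A \<times> nonzero_vecs m \<times> B)"
    using unit_sphere_set_subset_nonzero_vecs by blast
next
  show "class_coords m ` (A \<times> nonzero_vecs m \<times> B) \<subseteq> class_coords m ` (A \<times> unit_sphere_set m \<times> B)"
  proof
    fix x assume "x \<in> class_coords m ` (A \<times> nonzero_vecs m \<times> B)"
    then obtain a z t where x: "x = class_coords m (a, z, t)"
      and a: "a \<in> A" and z: "z \<in> nonzero_vecs m" and t: "t \<in> B"
      by auto
    obtain w where w: "w \<in> unit_sphere_set m" "proportional z w"
      using proj_class_unit_representative[OF z] by blast
    then have "proj_class m z = proj_class m w"
      using proj_class_eq_iff[OF z] unit_sphere_set_subset_nonzero_vecs by blast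
    then have "x = class_coords m (a, w, t)" by (simp add: x class_coords_def)
    then show "x \<in> class_coords m ` (A \<times> unit_sphere_set m \<times> B)" using a w(1) t by blast
  qed
qed

lemma join_homeomorphic_model_set:
  assumes m: "0 < proj_coords n"
  shows "join_top (nsphere (n div 2 - 1)) (complex_proj (proj_coords n))
    homeomorphic_space top_of_set (model_set n)"
proof -
  let ?k = "n div 2" and ?m = "proj_coords n"
  let ?X = "top_of_set (unit_sphere_set ?k :: (nat \<Rightarrow> real) set)" and ?I = "top_of_set {0..1::real}"
  let ?T = "prod_topology ?X (prod_topology (complex_proj ?m) ?I)"
  let ?R = "prod_topology ?X (prod_topology (top_of_set (nonzero_vecs ?m)) ?I)"
  let ?q = "quotient_class ?T join_rel \<circ> class_coords ?m"
  have k: "1 \<le> ?k" using m proj_coords_le[of n] by linarith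
  have J: "join_top (nsphere (?k - 1)) (complex_proj ?m) = quotient_top ?T join_rel"
    unfolding nsphere_eq_top_of_set[OF k] using m topspace_complex_proj_eq_empty_iff[of ?m]
    by (simp add: join_top_def)
  have R: "?R = top_of_set (join_domain n)" by simp
  have cls: "quotient_map ?R ?T (class_coords ?m)"
    by (rule quotient_map_class_coords)
       (simp_all add: compact_space_subtopology compact_unit_sphere_set Hausdorff_space_subtopology)
  have q: "quotient_map ?R (quotient_top ?T join_rel) ?q"
    by (rule quotient_map_compose[OF cls quotient_map_quotient_class[OF equiv_join_rel]])
  have "quotient_top ?T join_rel homeomorphic_space subtopology euclidean (join_param n ` topspace ?R)"
  proof (rule homeomorphic_space_quotient_image[OF q])
    show "continuous_map ?R euclidean (join_param n)"
      unfolding R by (simp add: continuous_on_join_param)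
  next
    fix p p' assume p: "p \<in> topspace ?R" and p': "p' \<in> topspace ?R"
    have "class_coords ?m p \<in> topspace ?T" "class_coords ?m p' \<in> topspace ?T"
      using cls p p' by (auto simp: quotient_map_def)
    then have "?q p = ?q p' \<longleftrightarrow> join_rel (class_coords ?m p) (class_coords ?m p')"
      by (simp add: quotient_class_eq_iff[OF equiv_join_rel])
    then show "join_param n p = join_param n p' \<longleftrightarrow> ?q p = ?q p'"
      using join_param_eq_iff p p' by simp
  next
    let ?K = "unit_sphere_set ?k \<times> unit_sphere_set ?m \<times> {0..1::real}"
    show "compactin ?R ?K"
      unfolding R compactin_subtopology using unit_sphere_set_subset_nonzero_vecs
      by (auto simp: compact_Times compact_unit_sphere_set)
    have "?q ` ?K = ?q ` topspace ?R"
      unfolding image_comp[symmetric] by (simp add: class_coords_unit_sphere_image)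
    then show "?q ` ?K = topspace (quotient_top ?T join_rel)"
      using q by (simp add: quotient_map_def)
  qed simp
  moreover have "join_param n ` topspace ?R = model_set n"
    using join_param_in_model_set model_set_subset_join_param_image[OF m] by auto
  ultimately show ?thesis unfolding J by simp
qed

lemma model_set_2_eq: "model_set 2 = (\<lambda>a. forget_phase 1 a (\<lambda>_. 0)) ` unit_sphere_set 1"
proof
  show "model_set 2 \<subseteq> (\<lambda>a. forget_phase 1 a (\<lambda>_. 0)) ` unit_sphere_set 1"
  proof
    fix P assume "P \<in> model_set 2"
    then obtain D c where P: "P = forget_phase 1 D c" and "c 0 = 0" "weight 1 D c = 1"
      by (auto simp: model_set_def sum_constraint_def)
    moreover have "L2_set (\<lambda>j. cmod (c j)) {..<1} = 0"
      using \<open>c 0 = 0\<close> by (simp add: L2_set_0' lessThan_Suc)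
    moreover have "L2_set (\<lambda>i. if i < 1 then D i else 0) {..<1} = L2_set D {..<1}"
      by (rule L2_set_cong) auto
    ultimately have "(\<lambda>i. if i < 1 then D i else 0) \<in> unit_sphere_set 1"
      by (simp add: unit_sphere_set_def L2_set_abs weight_def)
    moreover have "forget_phase 1 (\<lambda>i. if i < 1 then D i else 0) (\<lambda>_. 0) = P"
      unfolding P using \<open>c 0 = 0\<close> by (intro forget_phase_cong) simp_all
    ultimately show "P \<in> (\<lambda>a. forget_phase 1 a (\<lambda>_. 0)) ` unit_sphere_set 1" by blast
  qed
next
  show "(\<lambda>a. forget_phase 1 a (\<lambda>_. 0)) ` unit_sphere_set 1 \<subseteq> model_set 2"
  proof
    fix P assume "P \<in> (\<lambda>a. forget_phase 1 a (\<lambda>_. 0)) ` unit_sphere_set 1"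
    then obtain a where a: "a \<in> unit_sphere_set 1" "P = forget_phase 1 a (\<lambda>_. 0)" by blast
    then have "weight 1 a (\<lambda>_. 0) = 1"
      by (simp add: weight_def unit_sphere_set_def L2_set_abs L2_set_0')
    then show "P \<in> model_set 2" unfolding model_set_def sum_constraint_def
      using a(2) by (intro CollectI exI[of _ a] exI[of _ "\<lambda>_. 0 :: complex"]) simp
  qed
qed

lemma nsphere_0_homeomorphic_model_set_2: "nsphere 0 homeomorphic_space top_of_set (model_set 2)"
proof -
  let ?F = "\<lambda>a. forget_phase 1 a (\<lambda>_. 0)"
  have S: "nsphere 0 = top_of_set (unit_sphere_set 1)" using nsphere_eq_top_of_set[of 1] by simp
  have "continuous_on (unit_sphere_set 1) ?F"
    by (intro continuous_on_forget_phase continuous_on_coordinate continuous_on_const)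
  moreover have "inj_on ?F (unit_sphere_set 1)"
  proof (rule inj_onI)
    fix a b :: "nat \<Rightarrow> real" assume "a \<in> unit_sphere_set 1" "b \<in> unit_sphere_set 1" "?F a = ?F b"
    then have "b 0 = a 0" "\<forall>i\<ge>1. a i = 0" "\<forall>i\<ge>1. b i = 0"
      by (simp_all add: forget_phase_eq_iff unit_sphere_set_def)
    then show "a = b" by (metis less_one linorder_not_le ext)
  qed
  ultimately have "embedding_map (nsphere 0) euclidean ?F"
    unfolding S by (intro continuous_imp_embedding_map)
      (simp_all add: compact_space_subtopology compact_unit_sphere_set)
  then show ?thesis
    using embedding_map_imp_homeomorphic_space model_set_2_eq S by fastforce
qed

theorem theorem1p1:
  fixes n :: nat
  assumes "n \<ge> 2"
  shows "grass2_mod_torus n homeomorphic_space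
           join_top (nsphere (n div 2 - 1)) (complex_proj ((n + 1) div 2 - 1))"
proof -
  have orbit_space: "grass2_mod_torus n homeomorphic_space top_of_set (model_set n)"
    using grass2_mod_torus_homeomorphic_orbit_invariant_image[of n]
    unfolding orbit_invariant_image .
  have join: "join_top (nsphere (n div 2 - 1)) (complex_proj (proj_coords n))
      homeomorphic_space top_of_set (model_set n)"
  proof (cases "proj_coords n = 0")
    case True
    then have "topspace (complex_proj (proj_coords n)) = {}"
      using topspace_complex_proj_eq_empty_iff by blast
    moreover have "n = 2" using True assms by (simp add: proj_coords_def)
    ultimately show ?thesis
      using homeomorphic_space_trans[OF join_top_empty nsphere_0_homeomorphic_model_set_2] by simp
  next
    case False
    then show ?thesis by (intro join_homeomorphic_model_set) simp
  qed
  from orbit_space join[unfolded homeomorphic_space_sym[of "join_top _ _"]]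
  have "grass2_mod_torus n homeomorphic_space join_top (nsphere (n div 2 - 1)) (complex_proj (proj_coords n))"
    by (rule homeomorphic_space_trans)
  then show ?thesis by (simp add: proj_coords_def)
qed

end
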